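(* Assume the pair $(\mathcal D,\mathcal F)$ is good. Then for every $\varepsilon\in(0,1/4)$, $$\mathrm{RiskA}(\varepsilon)\le \theta(\varepsilon)\,\mathrm{Risk}_*(\varepsilon),\qquad \theta(\varepsilon)=\frac{2\ln(2/\varepsilon)}{\ln(1/(4\varepsilon))}.$$
   Context: Let $(\Omega,P)$ be a Polish space equipped with a $\sigma$-finite Borel measure $P$, let $\mathcal M\subset\mathbb R^m$, and let $\mathcal D=\{p_\mu\}_{\mu\in\mathcal M}$ be a parametric density family: for each $\mu\in\mathcal M$, $p_\mu$ is a nonnegative Borel function on $\Omega$ with $\int_\Omega p_\mu\,dP=1$. Let $\mathcal F$ be a finite-dimensional linear space of Borel functions on $\Omega$ containing the constants. The pair $(\mathcal D,\mathcal F)$ is called good if: (1) $\mathcal M$ is an open convex subset of $\mathbb R^m$; (2) $p_\mu(\omega)>0$ for all $\mu\in\mathcal M$, $\omega\in\Omega$; (3) for all $\mu,\nu\in\mathcal M$ the function $\omega\mapsto\ln(p_\mu(\omega)/p_\nu(\omega))$ belongs to $\mathcal F$; (4) for every $\phi\in\mathcal F$ the function $\mu\mapsto\ln\int_\Omega e^{\phi(\omega)}p_\mu(\omega)P(d\omega)$ is well defined (finite) and concave on $\mathcal M$. Let $X\subset\mathbb R^n$ be a nonempty convex compact set, $x\mapsto A(x)$ an affine map $\mathbb R^n\to\mathbb R^m$ with $A(X)\subset\mathcal M$, and $g\in\mathbb R^n$. An observation $\omega$ has density $p_{A(x)}$ w.r.t. $P$ for an unknown $x\in X$; the goal is to estimate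 $g^Tx$. An estimate is a Borel function $\hat g:\Omega\to\mathbb R$; it is called affine if $\hat g\in\mathcal F$. For $\varepsilon\in(0,1)$ the $\varepsilon$-risk of $\hat g$ is $\mathrm{Risk}(\hat g;\varepsilon)=\inf\{\delta:\ \sup_{x\in X}\mathrm{Prob}_{\omega\sim p_{A(x)}}\{|\hat g(\omega)-g^Tx|>\delta\}<\varepsilon\}$; $\mathrm{Risk}_*(\varepsilon)=\inf_{\hat g}\mathrm{Risk}(\hat g;\varepsilon)$, the infimum over all Borel estimates; $\mathrm{RiskA}(\varepsilon)=\inf_{\phi\in\mathcal F}\mathrm{Risk}(\phi;\varepsilon)$. *)

theory Defs
  imports "HOL-Analysis.Analysis" "HOL-Probability.Probability"
begin

definition fin_dim_fun_space :: "'a measure \<Rightarrow> ('a \<Rightarrow> real) set \<Rightarrow> bool" where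
  "fin_dim_fun_space P F \<longleftrightarrow>
     (\<exists>k (f :: nat \<Rightarrow> 'a \<Rightarrow> real). F = {(\<lambda>\<omega>. \<Sum>i<k. c i * f i \<omega>) | c. True})
     \<and> (\<forall>\<phi>\<in>F. \<phi> \<in> borel_measurable P)
     \<and> (\<forall>a::real. (\<lambda>\<omega>. a) \<in> F)"

definition density_family :: "'a measure \<Rightarrow> 'm set \<Rightarrow> ('m \<Rightarrow> 'a \<Rightarrow> real) \<Rightarrow> bool" where
  "density_family P M p \<longleftrightarrow>
     (\<forall>\<mu>\<in>M. p \<mu> \<in> borel_measurable P \<and> (\<forall>\<omega>\<in>space P. 0 \<le> p \<mu> \<omega>)
        \<and> (\<integral>\<^sup>+\<omega>. ennreal (p \<mu> \<omega>) \<partial>P) = 1)"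

definition good_pair :: "'a measure \<Rightarrow> ('m::euclidean_space) set \<Rightarrow> ('m \<Rightarrow> 'a \<Rightarrow> real)
    \<Rightarrow> ('a \<Rightarrow> real) set \<Rightarrow> bool" where
  "good_pair P M p F \<longleftrightarrow>
     open M \<and> convex M
     \<and> (\<forall>\<mu>\<in>M. \<forall>\<omega>\<in>space P. 0 < p \<mu> \<omega>)
     \<and> (\<forall>\<mu>\<in>M. \<forall>\<nu>\<in>M. (\<lambda>\<omega>. ln (p \<mu> \<omega> / p \<nu> \<omega>)) \<in> F)
     \<and> (\<forall>\<phi>\<in>F. (\<forall>\<mu>\<in>M. integrable P (\<lambda>\<omega>. exp (\<phi> \<omega>) * p \<mu> \<omega>))
          \<and> concave_on M (\<lambda>\<mu>. ln (\<integral>\<omega>. exp (\<phi> \<omega>) * p \<mu> \<omega> \<partial>P)))"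

definition err_prob :: "'a measure \<Rightarrow> ('m \<Rightarrow> 'a \<Rightarrow> real) \<Rightarrow> ('n \<Rightarrow> 'm)
    \<Rightarrow> ('n::euclidean_space) \<Rightarrow> ('a \<Rightarrow> real) \<Rightarrow> 'n \<Rightarrow> real \<Rightarrow> real" where
  "err_prob P p A g gh x \<delta> =
     measure (density P (\<lambda>\<omega>. ennreal (p (A x) \<omega>))) {\<omega>\<in>space P. \<bar>gh \<omega> - g \<bullet> x\<bar> > \<delta>}"

text \<open>epsilon-risk (infimum over the empty set is +infinity).\<close>
definition risk :: "'a measure \<Rightarrow> ('m \<Rightarrow> 'a \<Rightarrow> real) \<Rightarrow> 'n set \<Rightarrow> ('n \<Rightarrow> 'm)
    \<Rightarrow> ('n::euclidean_space) \<Rightarrow> ('a \<Rightarrow> real) \<Rightarrow> real \<Rightarrow> ereal" where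
  "risk P p X A g gh \<epsilon> =
     Inf {ereal \<delta> | \<delta>. (SUP x\<in>X. err_prob P p A g gh x \<delta>) < \<epsilon>}"

definition risk_star :: "'a measure \<Rightarrow> ('m \<Rightarrow> 'a \<Rightarrow> real) \<Rightarrow> 'n set \<Rightarrow> ('n \<Rightarrow> 'm)
    \<Rightarrow> ('n::euclidean_space) \<Rightarrow> real \<Rightarrow> ereal" where
  "risk_star P p X A g \<epsilon> = (INF gh\<in>borel_measurable P. risk P p X A g gh \<epsilon>)"

definition riskA :: "'a measure \<Rightarrow> ('m \<Rightarrow> 'a \<Rightarrow> real) \<Rightarrow> ('a \<Rightarrow> real) set \<Rightarrow> 'n set
    \<Rightarrow> ('n \<Rightarrow> 'm) \<Rightarrow> ('n::euclidean_space) \<Rightarrow> real \<Rightarrow> ereal" where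
  "riskA P p F X A g \<epsilon> = (INF \<phi>\<in>F. risk P p X A g \<phi> \<epsilon>)"

end

theory Submission
  imports Defs
begin

(*
  Write kappa = ln(2/eps) and rho = ln(1/(4 eps))/2 = -ln(2 sqrt eps), so theta = kappa/rho.

  Two-point testing shows that if the Hellinger affinity of the observation
  distributions of signals x, y is at least 2 sqrt eps, then Risk_* >= |g.x - g.y|/2. Goodness
  makes ln(affinity) jointly concave; shrinking a pair towards its midpoint by rho/kappa then
  gives |g.x - g.y|/2 <= theta Risk_* whenever ln affinity(x, y) >= -kappa.

  A concave minimax lemma (Helly's theorem plus a separating hyperplane) is applied
  twice: first to find a Lagrange multiplier beta for this modulus problem, then to find an
  affine psi in F for which, by Chernoff bounds, the estimate psi + const has deviation
  probabilities at most eps/2 on each side at threshold theta Risk_* + slack.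
*)

lemma concave_superlevel_convex:
  assumes "concave_on Z f"
  shows "convex {z \<in> Z. c \<le> f z}"
  unfolding convex_def
proof (intro ballI allI impI)
  fix x y :: 'a and u v :: real
  assume xy: "x \<in> {z \<in> Z. c \<le> f z}" "y \<in> {z \<in> Z. c \<le> f z}" and uv: "0 \<le> u" "0 \<le> v" "u + v = 1"
  have "c = u * c + v * c" using uv by (simp flip: distrib_right)
  also have "\<dots> \<le> u * f x + v * f y"
    using xy uv by (intro add_mono mult_left_mono) auto
  also have "\<dots> \<le> f (u *\<^sub>R x + v *\<^sub>R y)"
    using assms xy uv by (auto simp: concave_on_iff)
  finally show "u *\<^sub>R x + v *\<^sub>R y \<in> {z \<in> Z. c \<le> f z}"
    using assms xy uv by (auto simp: concave_on_iff convex_def)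
qed

lemma concave_on_affine_compose:
  assumes f: "concave_on T f" and S: "convex S" and hS: "h ` S \<subseteq> T"
    and h: "\<And>x y t. h ((1 - t) *\<^sub>R x + t *\<^sub>R y) = (1 - t) *\<^sub>R h x + t *\<^sub>R h y"
  shows "concave_on S (\<lambda>x. f (h x))"
  unfolding concave_on_iff
proof (intro conjI S ballI allI impI)
  fix x y and u v :: real
  assume xy: "x \<in> S" "y \<in> S" and uv: "0 \<le> u" "0 \<le> v" "u + v = 1"
  have "u * f (h x) + v * f (h y) \<le> f ((1 - v) *\<^sub>R h x + v *\<^sub>R h y)"
    using concave_onD[OF f, of v "h x" "h y"] xy uv hS by (auto simp: eq_diff_eq[symmetric])
  also have "(1 - v) *\<^sub>R h x + v *\<^sub>R h y = h (u *\<^sub>R x + v *\<^sub>R y)"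
    using h[of v x y] uv by (simp add: eq_diff_eq[symmetric])
  finally show "u * f (h x) + v * f (h y) \<le> f (h (u *\<^sub>R x + v *\<^sub>R y))" .
qed

lemma concave_on_affine_fun:
  assumes S: "convex S" and h: "\<And>x y t. h ((1 - t) *\<^sub>R x + t *\<^sub>R y) = (1 - t) * h x + t * h y"
  shows "concave_on S h"
  unfolding concave_on_iff
proof (intro conjI S ballI allI impI)
  fix x y and u v :: real
  assume "u + v = 1"
  then show "u * h x + v * h y \<le> h (u *\<^sub>R x + v *\<^sub>R y)" using h[of v x y] by (simp add: eq_diff_eq[symmetric])
qed

lemma concave_on_continuous:
  fixes f :: "'a::euclidean_space \<Rightarrow> real"
  assumes "open S" "concave_on S f"
  shows "continuous_on S f"
proof -
  have "continuous_on S (\<lambda>x. - f x)"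
    using convex_on_continuous[OF assms(1)] assms(2) unfolding concave_on_def by blast
  then show ?thesis using continuous_on_minus by fastforce
qed

lemma nonneg_separating_functional:
  fixes U :: "'e::euclidean_space set"
  assumes U: "convex U" "U \<noteq> {}" and q: "q \<notin> U"
    and down: "\<And>u b s. u \<in> U \<Longrightarrow> b \<in> Basis \<Longrightarrow> 0 \<le> s \<Longrightarrow> u - s *\<^sub>R b \<in> U"
  shows "\<exists>l. l \<noteq> 0 \<and> (\<forall>b\<in>Basis. 0 \<le> l \<bullet> b) \<and> (\<forall>u\<in>U. l \<bullet> u \<le> l \<bullet> q)"
proof -
  have "convex ((\<lambda>u. u - q) ` U)" "0 \<notin> (\<lambda>u. u - q) ` U"
    using U q by (auto simp: convex_translation_subtract_eq)
  then obtain a where a: "a \<noteq> 0" "\<forall>v\<in>(\<lambda>u. u - q) ` U. 0 \<le> a \<bullet> v"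
    using separating_hyperplane_set_0 by blast
  define l where "l = - a"
  have sep: "l \<bullet> u \<le> l \<bullet> q" if "u \<in> U" for u
    using a(2) that unfolding l_def by (auto simp: inner_diff_right)
  obtain u0 where u0: "u0 \<in> U" using U(2) by blast
  have nonneg: "0 \<le> l \<bullet> b" if b: "b \<in> Basis" for b
  proof (rule ccontr)
    assume neg: "\<not> 0 \<le> l \<bullet> b"
    define s where "s = (l \<bullet> q - l \<bullet> u0 + 1) / (- (l \<bullet> b))"
    have s: "0 \<le> s" "s * (- (l \<bullet> b)) = l \<bullet> q - l \<bullet> u0 + 1"
      using neg sep[OF u0] unfolding s_def by (auto simp: field_simps)
    have "l \<bullet> (u0 - s *\<^sub>R b) \<le> l \<bullet> q" using sep[OF down[OF u0 b s(1)]] .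
    then show False using s(2) by (simp add: inner_diff_right algebra_simps)
  qed
  moreover have "l \<noteq> 0" using a(1) unfolding l_def by simp
  ultimately show ?thesis using sep by blast
qed

lemma concave_hypograph_convex:
  fixes f :: "'e::euclidean_space \<Rightarrow> 'z::real_vector \<Rightarrow> real"
  assumes Z: "convex Z" and conc: "\<And>b. b \<in> Basis \<Longrightarrow> concave_on Z (f b)"
  shows "convex {u :: 'e. \<exists>z\<in>Z. \<forall>b\<in>Basis. u \<bullet> b \<le> f b z}"
  unfolding convex_def
proof (intro ballI allI impI, safe)
  fix x y :: 'e and u v :: real and z1 z2
  assume uv: "0 \<le> u" "0 \<le> v" "u + v = 1" and z1: "z1 \<in> Z" "\<forall>b\<in>Basis. x \<bullet> b \<le> f b z1"
    and z2: "z2 \<in> Z" "\<forall>b\<in>Basis. y \<bullet> b \<le> f b z2"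
  have "(u *\<^sub>R x + v *\<^sub>R y) \<bullet> b \<le> f b (u *\<^sub>R z1 + v *\<^sub>R z2)" if b: "b \<in> Basis" for b
  proof -
    have "(u *\<^sub>R x + v *\<^sub>R y) \<bullet> b \<le> u * f b z1 + v * f b z2"
      using z1 z2 b uv by (simp add: inner_add_left add_mono mult_left_mono)
    also have "\<dots> \<le> f b (u *\<^sub>R z1 + v *\<^sub>R z2)"
      using conc[OF b] z1 z2 uv by (auto simp: concave_on_iff)
    finally show ?thesis .
  qed
  moreover have "u *\<^sub>R z1 + v *\<^sub>R z2 \<in> Z" using Z z1 z2 uv by (auto simp: convex_def)
  ultimately show "\<exists>z\<in>Z. \<forall>b\<in>Basis. (u *\<^sub>R x + v *\<^sub>R y) \<bullet> b \<le> f b z" by blast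
qed

lemma coordinate_sum_pos:
  fixes l :: "'e::euclidean_space"
  assumes "l \<noteq> 0" "\<forall>b\<in>Basis. 0 \<le> l \<bullet> b"
  shows "0 < (\<Sum>b\<in>Basis. l \<bullet> b)"
proof -
  have "(\<Sum>b\<in>Basis. l \<bullet> b) \<noteq> 0"
  proof
    assume "(\<Sum>b\<in>Basis. l \<bullet> b) = 0"
    then have "\<forall>b\<in>Basis. l \<bullet> b = 0" using assms(2) by (simp add: sum_nonneg_eq_0_iff)
    then show False using assms(1) by (simp add: euclidean_all_zero_iff)
  qed
  then show ?thesis using assms(2) by (metis order_le_neq_trans sum_nonneg)
qed

lemma concave_alternative:
  fixes f :: "'e::euclidean_space \<Rightarrow> 'z::real_vector \<Rightarrow> real"
  assumes Z: "convex Z" "Z \<noteq> {}" and conc: "\<And>b. b \<in> Basis \<Longrightarrow> concave_on Z (f b)"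
    and cover: "\<And>z. z \<in> Z \<Longrightarrow> \<exists>b\<in>Basis. f b z < c"
  shows "\<exists>w. (\<forall>b\<in>Basis. 0 \<le> w b) \<and> (\<Sum>b\<in>Basis. w b) = 1
             \<and> (\<forall>z\<in>Z. (\<Sum>b\<in>Basis. w b * f b z) \<le> c)"
proof -
  define U where "U = {u :: 'e. \<exists>z\<in>Z. \<forall>b\<in>Basis. u \<bullet> b \<le> f b z}"
  define q :: 'e where "q = (\<Sum>b\<in>Basis. c *\<^sub>R b)"
  define vec where "vec z = (\<Sum>b\<in>Basis. f b z *\<^sub>R b)" for z
  have q: "q \<bullet> b = c" and vec: "vec z \<bullet> b = f b z" if "b \<in> Basis" for b z
    unfolding q_def vec_def using that by (simp_all add: inner_sum_left inner_Basis if_distrib cong: if_cong)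
  have vecU: "vec z \<in> U" if "z \<in> Z" for z unfolding U_def using that vec by auto
  have "convex U" unfolding U_def by (rule concave_hypograph_convex[OF Z(1) conc])
  moreover have "U \<noteq> {}" using vecU Z(2) by blast
  moreover have "q \<notin> U"
  proof
    assume "q \<in> U"
    then obtain z where "z \<in> Z" "\<forall>b\<in>Basis. c \<le> f b z" unfolding U_def using q by auto
    then show False using cover by force
  qed
  moreover have "u - s *\<^sub>R b \<in> U" if u: "u \<in> U" and b: "b \<in> Basis" and s: "0 \<le> s" for u b s
  proof -
    obtain z where z: "z \<in> Z" "\<forall>b'\<in>Basis. u \<bullet> b' \<le> f b' z" using u unfolding U_def by blast
    have "(u - s *\<^sub>R b) \<bullet> b' \<le> f b' z" if "b' \<in> Basis" for b'
      using z(2) that b s by (auto simp: inner_diff_left inner_Basis)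
    then show ?thesis unfolding U_def using z(1) by blast
  qed
  ultimately have "\<exists>l. l \<noteq> 0 \<and> (\<forall>b\<in>Basis. 0 \<le> l \<bullet> b) \<and> (\<forall>u\<in>U. l \<bullet> u \<le> l \<bullet> q)"
    by (rule nonneg_separating_functional)
  then obtain l where l: "l \<noteq> 0" "\<forall>b\<in>Basis. 0 \<le> l \<bullet> b" "\<forall>u\<in>U. l \<bullet> u \<le> l \<bullet> q"
    by blast
  define S where "S = (\<Sum>b\<in>Basis. l \<bullet> b)"
  have S: "0 < S" unfolding S_def using coordinate_sum_pos l(1,2) by blast
  have "(\<Sum>b\<in>Basis. (l \<bullet> b / S) * f b z) \<le> c" if z: "z \<in> Z" for z
  proof -
    have "(\<Sum>b\<in>Basis. (l \<bullet> b) * f b z) = l \<bullet> vec z" by (subst euclidean_inner) (simp add: vec)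
    also have "\<dots> \<le> l \<bullet> q" using l(3) vecU[OF z] by blast
    also have "\<dots> = S * c" unfolding S_def by (subst euclidean_inner) (simp add: q sum_distrib_right)
    finally show ?thesis using S by (simp add: sum_divide_distrib[symmetric] divide_le_eq mult.commute)
  qed
  moreover have "(\<Sum>b\<in>Basis. l \<bullet> b / S) = 1" using S by (simp add: sum_divide_distrib[symmetric] S_def)
  ultimately show ?thesis using l(2) S by (intro exI[of _ "\<lambda>b. l \<bullet> b / S"]) auto
qed

lemma helly_empty_subfamily:
  fixes \<F> :: "'a::euclidean_space set set"
  assumes "finite \<F>" "\<And>S. S \<in> \<F> \<Longrightarrow> convex S" "\<Inter>\<F> = {}"
  shows "\<exists>T\<subseteq>\<F>. card T \<le> DIM('a) + 1 \<and> \<Inter>T = {}"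
proof (cases "card \<F> \<le> DIM('a) + 1")
  case True
  then show ?thesis using assms(3) by blast
next
  case False
  then show ?thesis using Helly[of \<F>] assms(2,3) by force
qed

lemma helly_cover_reduction:
  fixes Z :: "'z::euclidean_space set" and G :: "'k \<Rightarrow> 'z \<Rightarrow> real"
  assumes Z: "compact Z" "convex Z" "Z \<noteq> {}"
    and conc: "\<And>k. k \<in> K \<Longrightarrow> concave_on Z (G k)"
    and cont: "\<And>k. k \<in> K \<Longrightarrow> continuous_on Z (G k)"
    and cover: "\<And>z. z \<in> Z \<Longrightarrow> \<exists>k\<in>K. G k z < c"
  shows "\<exists>K1\<subseteq>K. finite K1 \<and> K1 \<noteq> {} \<and> card K1 \<le> DIM('z) + 1 \<and> (\<forall>z\<in>Z. \<exists>k\<in>K1. G k z < c)"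
proof -
  define C where "C k = {z \<in> Z. c \<le> G k z}" for k
  have CZ: "C k \<subseteq> Z" for k unfolding C_def by auto
  have closedC: "closed (C k)" if "k \<in> K" for k
    using continuous_closed_preimage[OF cont[OF that] compact_imp_closed[OF Z(1)], of "{c..}"]
    by (simp add: C_def vimage_def Int_def conj_commute)
  have covered_iff: "(\<forall>z\<in>Z. \<exists>k\<in>K'. G k z < c) \<longleftrightarrow> Z \<inter> \<Inter>(C ` K') = {}" for K'
    unfolding C_def by force
  text \<open>By compactness, finitely many superlevel sets already have empty intersection.\<close>
  obtain K0 where K0: "K0 \<subseteq> K" "finite K0" "Z \<inter> \<Inter>(C ` K0) = {}"
  proof -
    obtain F' where "finite F'" "F' \<subseteq> C ` K" "Z \<inter> \<Inter>F' = {}"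
      using compact_imp_fip[OF Z(1), of "C ` K"] closedC cover covered_iff[of K] by blast
    then show thesis using that finite_subset_image by metis
  qed
  have "K0 \<noteq> {}" using K0(3) Z(3) by auto
  then have "\<Inter>(C ` K0) = {}" using K0(3) CZ by blast
  then obtain T where T: "T \<subseteq> C ` K0" "card T \<le> DIM('z) + 1" "\<Inter>T = {}"
    using helly_empty_subfamily[of "C ` K0"] K0 concave_superlevel_convex[OF conc] unfolding C_def by blast
  obtain K1 where K1: "K1 \<subseteq> K0" "inj_on C K1" "T = C ` K1"
    using T(1) subset_image_inj by metis
  have "finite K1" using K1(1) K0(2) finite_subset by blast
  moreover have "card K1 \<le> DIM('z) + 1" using T(2) K1 card_image by fastforce
  moreover have "K1 \<noteq> {}" using T(3) K1(3) Z(3) by auto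
  moreover have "\<forall>z\<in>Z. \<exists>k\<in>K1. G k z < c" using covered_iff[of K1] T(3) K1(3) by blast
  ultimately show ?thesis using K1(1) K0(1) by (intro exI[of _ K1]) auto
qed

text \<open>Let the functions G k (k in K) be
  continuous and concave on a nonempty convex compact set Z, and let K be closed under mixing in
  the sense that every convex combination of (DIM Z + 1) members is dominated by a member.\<close>
lemma concave_minimax:
  fixes Z :: "'z::euclidean_space set" and G :: "'k \<Rightarrow> 'z \<Rightarrow> real"
  assumes Z: "compact Z" "convex Z" "Z \<noteq> {}"
    and conc: "\<And>k. k \<in> K \<Longrightarrow> concave_on Z (G k)"
    and cont: "\<And>k. k \<in> K \<Longrightarrow> continuous_on Z (G k)"
    and mix: "\<And>kk w. (\<And>b. b \<in> (Basis :: ('z \<times> real) set) \<Longrightarrow> kk b \<in> K) \<Longrightarrow>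
        (\<And>b. b \<in> Basis \<Longrightarrow> 0 \<le> w b) \<Longrightarrow> (\<Sum>b\<in>Basis. w b) = 1 \<Longrightarrow>
        \<exists>k\<in>K. \<forall>z\<in>Z. G k z \<le> (\<Sum>b\<in>Basis. w b * G (kk b) z)"
    and cover: "\<And>z. z \<in> Z \<Longrightarrow> \<exists>k\<in>K. G k z < c"
  shows "\<exists>k\<in>K. \<forall>z\<in>Z. G k z \<le> c"
proof -
  obtain K1 where K1: "K1 \<subseteq> K" "finite K1" "K1 \<noteq> {}" "card K1 \<le> DIM('z \<times> real)"
      "\<forall>z\<in>Z. \<exists>k\<in>K1. G k z < c"
    using helly_cover_reduction[OF Z conc cont cover] by (auto simp: DIM_prod)
  text \<open>Index the members of K1 by the basis of the product space, repeating if necessary.\<close>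
  obtain h where h: "h ` K1 \<subseteq> (Basis :: ('z \<times> real) set)" "inj_on h K1"
    using card_le_inj[OF K1(2) finite_Basis K1(4)] by blast
  obtain k0 where k0: "k0 \<in> K1" using K1(3) by blast
  define kk where "kk b = (if b \<in> h ` K1 then inv_into K1 h b else k0)" for b
  have kkK1: "kk b \<in> K1" for b unfolding kk_def using k0 by (auto simp: inv_into_into)
  have kk_h: "kk (h k) = k" if "k \<in> K1" for k unfolding kk_def using that h by auto
  have "\<exists>b\<in>Basis. G (kk b) z < c" if "z \<in> Z" for z
    using K1(5) that kk_h h(1) by (metis image_subset_iff)
  then obtain w where w: "\<forall>b\<in>Basis. 0 \<le> w b" "(\<Sum>b\<in>Basis. w b) = 1"
      "\<forall>z\<in>Z. (\<Sum>b\<in>Basis. w b * G (kk b) z) \<le> c"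
    using concave_alternative[OF Z(2,3), of "\<lambda>b. G (kk b)"] conc kkK1 K1(1) by blast
  obtain k where "k \<in> K" "\<forall>z\<in>Z. G k z \<le> (\<Sum>b\<in>Basis. w b * G (kk b) z)"
    using mix[of kk w] kkK1 K1(1) w(1,2) by blast
  then show ?thesis using w(3) by force
qed

lemma sqrt_ratio_mult:
  fixes a b :: real
  assumes "0 < a" "0 < b"
  shows "sqrt (b / a) * a = sqrt (a * b)"
proof -
  have "sqrt (b / a) * a = sqrt (b / a * (a * a))"
    using assms by (simp only: real_sqrt_mult real_sqrt_mult_self abs_of_pos)
  also have "b / a * (a * a) = a * b" using assms by (simp add: field_simps)
  finally show ?thesis .
qed

lemma sqrt_mult_le_weighted:
  fixes a b s :: real
  assumes "0 < s" "0 \<le> a" "0 \<le> b"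
  shows "sqrt (a * b) \<le> (a / s + s * b) / 2"
proof -
  have "sqrt (a * b) = sqrt ((a / s) * (s * b))" using assms(1) by simp
  also have "\<dots> \<le> (a / s + s * b) / 2" using assms by (intro arith_geo_mean_sqrt) auto
  finally show ?thesis .
qed

lemma split_sum_bound:
  fixes U V :: "'x \<Rightarrow> real"
  assumes "X \<noteq> {}" and UV: "\<And>x y. x \<in> X \<Longrightarrow> y \<in> X \<Longrightarrow> U x + V y \<le> C"
  shows "\<exists>s. (\<forall>x\<in>X. U x \<le> s) \<and> (\<forall>y\<in>X. V y \<le> C - s)"
proof (intro exI conjI ballI)
  obtain y0 where y0: "y0 \<in> X" using assms(1) by blast
  have bdd: "bdd_above (U ` X)" using UV[OF _ y0] by (intro bdd_aboveI[of _ "C - V y0"]) (auto simp: algebra_simps)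
  show "U x \<le> Sup (U ` X)" if "x \<in> X" for x using bdd that by (intro cSup_upper) auto
  show "V y \<le> C - Sup (U ` X)" if "y \<in> X" for y
  proof -
    have "Sup (U ` X) \<le> C - V y" using assms(1) UV[OF _ that] by (intro cSup_least) (auto simp: algebra_simps)
    then show ?thesis by simp
  qed
qed

locale good_family =
  fixes P :: "'a::polish_space measure" and M :: "'m::euclidean_space set"
    and p :: "'m \<Rightarrow> 'a \<Rightarrow> real" and F :: "('a \<Rightarrow> real) set"
  assumes sets_P: "sets P = sets borel" and dens: "density_family P M p"
    and fin_dim: "fin_dim_fun_space P F" and good: "good_pair P M p F"
begin

lemma space_P [simp]: "space P = UNIV"
  using sets_eq_imp_space_eq[OF sets_P] by simp

lemma F_lin:
  assumes "\<phi> \<in> F" "\<psi> \<in> F"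
  shows "(\<lambda>\<omega>. a * \<phi> \<omega> + b * \<psi> \<omega>) \<in> F"
proof -
  obtain k and f :: "nat \<Rightarrow> 'a \<Rightarrow> real" where F: "F = {(\<lambda>\<omega>. \<Sum>i<k. c i * f i \<omega>) | c. True}"
    using fin_dim unfolding fin_dim_fun_space_def by blast
  obtain c1 c2 where c: "\<phi> = (\<lambda>\<omega>. \<Sum>i<k. c1 i * f i \<omega>)" "\<psi> = (\<lambda>\<omega>. \<Sum>i<k. c2 i * f i \<omega>)"
    using assms F by blast
  have "(\<lambda>\<omega>. a * \<phi> \<omega> + b * \<psi> \<omega>) = (\<lambda>\<omega>. \<Sum>i<k. (a * c1 i + b * c2 i) * f i \<omega>)"
    unfolding c by (auto simp: sum_distrib_left sum.distrib algebra_simps)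
  then show ?thesis unfolding F by (intro CollectI exI[of _ "\<lambda>i. a * c1 i + b * c2 i"]) simp
qed

lemma F_const: "(\<lambda>\<omega>. a) \<in> F"
  using fin_dim unfolding fin_dim_fun_space_def by blast

lemma F_measurable: "\<phi> \<in> F \<Longrightarrow> \<phi> \<in> borel_measurable P"
  using fin_dim unfolding fin_dim_fun_space_def by blast

lemma F_scale: "\<phi> \<in> F \<Longrightarrow> (\<lambda>\<omega>. a * \<phi> \<omega>) \<in> F"
  using F_lin[of \<phi> \<phi> a 0] by simp

lemma F_add_const: "\<phi> \<in> F \<Longrightarrow> (\<lambda>\<omega>. \<phi> \<omega> + a) \<in> F"
  using F_lin[of \<phi> "\<lambda>_. a" 1 1] F_const by simp

lemma F_sum:
  assumes "finite B" "\<And>b. b \<in> B \<Longrightarrow> \<phi> b \<in> F"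
  shows "(\<lambda>\<omega>. \<Sum>b\<in>B. w b * \<phi> b \<omega>) \<in> F"
  using assms
proof (induction B rule: finite_induct)
  case empty
  then show ?case using F_const[of 0] by simp
next
  case (insert b B)
  then have "(\<lambda>\<omega>. w b * \<phi> b \<omega> + 1 * (\<Sum>b\<in>B. w b * \<phi> b \<omega>)) \<in> F" by (intro F_lin) auto
  then show ?case using insert by simp
qed

lemma p_pos: "\<mu> \<in> M \<Longrightarrow> 0 < p \<mu> \<omega>"
  using good unfolding good_pair_def by auto

lemma p_measurable: "\<mu> \<in> M \<Longrightarrow> p \<mu> \<in> borel_measurable P"
  using dens unfolding density_family_def by auto

lemma log_ratio_in_F: "\<mu> \<in> M \<Longrightarrow> \<nu> \<in> M \<Longrightarrow> (\<lambda>\<omega>. ln (p \<mu> \<omega> / p \<nu> \<omega>)) \<in> F"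
  using good unfolding good_pair_def by auto

lemma M_open: "open M" and M_convex: "convex M"
  using good unfolding good_pair_def by auto

definition mgf :: "'m \<Rightarrow> ('a \<Rightarrow> real) \<Rightarrow> real" where
  "mgf \<mu> \<phi> = (\<integral>\<omega>. exp (\<phi> \<omega>) * p \<mu> \<omega> \<partial>P)"

definition \<Lambda> :: "'m \<Rightarrow> ('a \<Rightarrow> real) \<Rightarrow> real" where
  "\<Lambda> \<mu> \<phi> = ln (mgf \<mu> \<phi>)"

lemma mgf_integrable: "\<phi> \<in> F \<Longrightarrow> \<mu> \<in> M \<Longrightarrow> integrable P (\<lambda>\<omega>. exp (\<phi> \<omega>) * p \<mu> \<omega>)"
  using good unfolding good_pair_def by auto

lemma \<Lambda>_concave: "\<phi> \<in> F \<Longrightarrow> concave_on M (\<lambda>\<mu>. \<Lambda> \<mu> \<phi>)"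
  using good unfolding good_pair_def \<Lambda>_def mgf_def by auto

lemma \<Lambda>_continuous: "\<phi> \<in> F \<Longrightarrow> continuous_on M (\<lambda>\<mu>. \<Lambda> \<mu> \<phi>)"
  using concave_on_continuous[OF M_open \<Lambda>_concave] .

lemma p_integrable: "\<mu> \<in> M \<Longrightarrow> integrable P (p \<mu>)"
  using mgf_integrable[OF F_const[of 0]] by simp

lemma p_integral: "\<mu> \<in> M \<Longrightarrow> (\<integral>\<omega>. p \<mu> \<omega> \<partial>P) = 1"
proof -
  assume \<mu>: "\<mu> \<in> M"
  have "(\<integral>\<omega>. p \<mu> \<omega> \<partial>P) = enn2real (\<integral>\<^sup>+\<omega>. ennreal (p \<mu> \<omega>) \<partial>P)"
    using p_measurable[OF \<mu>] p_pos[OF \<mu>] by (intro integral_eq_nn_integral) (auto intro: less_imp_le)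
  also have "\<dots> = 1" using dens \<mu> unfolding density_family_def by auto
  finally show ?thesis .
qed

text \<open>The exponential moment is positive, so \<Lambda> is its honest logarithm.\<close>
lemma mgf_pos:
  assumes "\<phi> \<in> F" "\<mu> \<in> M"
  shows "0 < mgf \<mu> \<phi>"
proof -
  have nonneg: "0 \<le> exp (\<phi> \<omega>) * p \<mu> \<omega>" for \<omega> using p_pos[OF assms(2)] by (simp add: less_imp_le)
  have "mgf \<mu> \<phi> \<noteq> 0"
  proof
    assume "mgf \<mu> \<phi> = 0"
    then have "AE \<omega> in P. exp (\<phi> \<omega>) * p \<mu> \<omega> = 0"
      using integral_nonneg_eq_0_iff_AE[OF mgf_integrable[OF assms]] nonneg unfolding mgf_def by auto
    then have "(\<integral>\<omega>. p \<mu> \<omega> \<partial>P) = 0" by (intro integral_eq_zero_AE) simp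
    then show False using p_integral[OF assms(2)] by simp
  qed
  moreover have "0 \<le> mgf \<mu> \<phi>" unfolding mgf_def by (intro integral_nonneg_AE AE_I2 nonneg)
  ultimately show ?thesis by simp
qed

lemma mgf_eq_exp_\<Lambda>: "\<phi> \<in> F \<Longrightarrow> \<mu> \<in> M \<Longrightarrow> mgf \<mu> \<phi> = exp (\<Lambda> \<mu> \<phi>)"
  unfolding \<Lambda>_def using mgf_pos by simp

lemma mgf_add_const: "mgf \<mu> (\<lambda>\<omega>. \<phi> \<omega> + a) = exp a * mgf \<mu> \<phi>"
  unfolding mgf_def by (simp add: exp_add algebra_simps)

lemma mgf_convex_comb:
  assumes B: "finite B" and w: "\<And>b. b \<in> B \<Longrightarrow> 0 \<le> w b" "(\<Sum>b\<in>B. w b) = 1"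
    and \<phi>: "\<And>b. b \<in> B \<Longrightarrow> \<phi> b \<in> F" and \<mu>: "\<mu> \<in> M"
  shows "mgf \<mu> (\<lambda>\<omega>. \<Sum>b\<in>B. w b * \<phi> b \<omega>) \<le> (\<Sum>b\<in>B. w b * mgf \<mu> (\<phi> b))"
proof -
  have "B \<noteq> {}" using w(2) by auto
  then have pointwise: "exp (\<Sum>b\<in>B. w b * \<phi> b \<omega>) \<le> (\<Sum>b\<in>B. w b * exp (\<phi> b \<omega>))" for \<omega>
    using convex_on_sum[OF B _ exp_convex w(2), of "\<lambda>b. \<phi> b \<omega>"] w(1) by simp
  have "mgf \<mu> (\<lambda>\<omega>. \<Sum>b\<in>B. w b * \<phi> b \<omega>) \<le> (\<integral>\<omega>. (\<Sum>b\<in>B. w b * (exp (\<phi> b \<omega>) * p \<mu> \<omega>)) \<partial>P)"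
    unfolding mgf_def
  proof (intro integral_mono)
    show "integrable P (\<lambda>\<omega>. exp (\<Sum>b\<in>B. w b * \<phi> b \<omega>) * p \<mu> \<omega>)"
      using mgf_integrable[OF F_sum[OF B \<phi>] \<mu>] .
    show "integrable P (\<lambda>\<omega>. \<Sum>b\<in>B. w b * (exp (\<phi> b \<omega>) * p \<mu> \<omega>))"
      using mgf_integrable[OF \<phi> \<mu>] by auto
    show "exp (\<Sum>b\<in>B. w b * \<phi> b \<omega>) * p \<mu> \<omega> \<le> (\<Sum>b\<in>B. w b * (exp (\<phi> b \<omega>) * p \<mu> \<omega>))" for \<omega>
      using mult_right_mono[OF pointwise less_imp_le[OF p_pos[OF \<mu>]]]
      by (simp add: sum_distrib_right mult.assoc)
  qed
  also have "\<dots> = (\<Sum>b\<in>B. w b * mgf \<mu> (\<phi> b))"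
    unfolding mgf_def using mgf_integrable[OF \<phi> \<mu>] by (simp add: integral_sum)
  finally show ?thesis .
qed

text \<open>This is what makes the family F closed under
  mixing in the minimax argument for the estimate.\<close>
lemma \<Lambda>_convex_comb:
  assumes B: "finite B" and w: "\<And>b. b \<in> B \<Longrightarrow> 0 \<le> w b" "(\<Sum>b\<in>B. w b) = 1"
    and \<phi>: "\<And>b. b \<in> B \<Longrightarrow> \<phi> b \<in> F" and \<mu>: "\<mu> \<in> M"
  shows "\<Lambda> \<mu> (\<lambda>\<omega>. \<Sum>b\<in>B. w b * \<phi> b \<omega>) \<le> (\<Sum>b\<in>B. w b * \<Lambda> \<mu> (\<phi> b))"
proof -
  define S where "S = (\<Sum>b\<in>B. w b * \<Lambda> \<mu> (\<phi> b))"
  text \<open>Normalize each \<phi> b to have exponential moment 1.\<close>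
  define \<phi>' where "\<phi>' b = (\<lambda>\<omega>. \<phi> b \<omega> + - \<Lambda> \<mu> (\<phi> b))" for b
  have \<phi>'F: "\<phi>' b \<in> F" if "b \<in> B" for b unfolding \<phi>'_def using F_add_const[OF \<phi>[OF that]] .
  have mgf_\<phi>': "mgf \<mu> (\<phi>' b) = 1" if "b \<in> B" for b
    unfolding \<phi>'_def mgf_add_const \<Lambda>_def using mgf_pos[OF \<phi>[OF that] \<mu>] by (simp add: exp_minus)
  have comb: "(\<lambda>\<omega>. \<Sum>b\<in>B. w b * \<phi>' b \<omega>) = (\<lambda>\<omega>. (\<Sum>b\<in>B. w b * \<phi> b \<omega>) + - S)"
    unfolding \<phi>'_def S_def by (simp add: algebra_simps sum.distrib sum_subtractf)
  have "exp (- S) * mgf \<mu> (\<lambda>\<omega>. \<Sum>b\<in>B. w b * \<phi> b \<omega>) = mgf \<mu> (\<lambda>\<omega>. \<Sum>b\<in>B. w b * \<phi>' b \<omega>)"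
    unfolding comb mgf_add_const ..
  also have "\<dots> \<le> (\<Sum>b\<in>B. w b * mgf \<mu> (\<phi>' b))" by (rule mgf_convex_comb[OF B w \<phi>'F \<mu>])
  also have "\<dots> = 1" using w(2) mgf_\<phi>' by simp
  finally have "mgf \<mu> (\<lambda>\<omega>. \<Sum>b\<in>B. w b * \<phi> b \<omega>) \<le> exp S" by (simp add: exp_minus field_simps)
  then have "ln (mgf \<mu> (\<lambda>\<omega>. \<Sum>b\<in>B. w b * \<phi> b \<omega>)) \<le> ln (exp S)"
    using mgf_pos[OF F_sum[OF B \<phi>] \<mu>] by (subst ln_le_cancel_iff) auto
  then show ?thesis unfolding \<Lambda>_def S_def by simp
qed

definition affinity :: "'m \<Rightarrow> 'm \<Rightarrow> real" where
  "affinity \<mu> \<nu> = (\<integral>\<omega>. sqrt (p \<mu> \<omega> * p \<nu> \<omega>) \<partial>P)"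

definition half_llr :: "'m \<Rightarrow> 'm \<Rightarrow> 'a \<Rightarrow> real" where
  "half_llr \<mu> \<nu> = (\<lambda>\<omega>. (1/2) * ln (p \<nu> \<omega> / p \<mu> \<omega>))"

lemma half_llr_in_F: "\<mu> \<in> M \<Longrightarrow> \<nu> \<in> M \<Longrightarrow> half_llr \<mu> \<nu> \<in> F"
  unfolding half_llr_def by (intro F_scale log_ratio_in_F)

lemma neg_half_llr_in_F: "\<mu> \<in> M \<Longrightarrow> \<nu> \<in> M \<Longrightarrow> (\<lambda>\<omega>. - half_llr \<mu> \<nu> \<omega>) \<in> F"
  using F_scale[OF half_llr_in_F, of \<mu> \<nu> "-1"] by simp

lemma half_llr_swap:
  assumes "\<mu> \<in> M" "\<nu> \<in> M"
  shows "- half_llr \<mu> \<nu> \<omega> = half_llr \<nu> \<mu> \<omega>"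
proof -
  have "0 < p \<nu> \<omega> / p \<mu> \<omega>" using p_pos assms by simp
  then have "ln (p \<mu> \<omega> / p \<nu> \<omega>) = - ln (p \<nu> \<omega> / p \<mu> \<omega>)"
    using ln_inverse by (metis inverse_divide)
  then show ?thesis unfolding half_llr_def by simp
qed

lemma exp_half_llr:
  assumes "\<mu> \<in> M" "\<nu> \<in> M"
  shows "exp (half_llr \<mu> \<nu> \<omega>) * p \<mu> \<omega> = sqrt (p \<mu> \<omega> * p \<nu> \<omega>)"
proof -
  have pos: "0 < p \<mu> \<omega>" "0 < p \<nu> \<omega>" using p_pos assms by auto
  have "exp (half_llr \<mu> \<nu> \<omega>) = sqrt (p \<nu> \<omega> / p \<mu> \<omega>)"
    unfolding half_llr_def using pos by (simp add: powr_half_sqrt[symmetric] powr_def)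
  then show ?thesis using sqrt_ratio_mult[OF pos] by simp
qed

lemma exp_neg_half_llr:
  assumes "\<mu> \<in> M" "\<nu> \<in> M"
  shows "exp (- half_llr \<mu> \<nu> \<omega>) * p \<nu> \<omega> = sqrt (p \<mu> \<omega> * p \<nu> \<omega>)"
  using exp_half_llr[OF assms(2,1)] half_llr_swap[OF assms] by (simp add: mult.commute)

lemma affinity_mgf:
  assumes "\<mu> \<in> M" "\<nu> \<in> M"
  shows "affinity \<mu> \<nu> = mgf \<mu> (half_llr \<mu> \<nu>)" "affinity \<mu> \<nu> = mgf \<nu> (\<lambda>\<omega>. - half_llr \<mu> \<nu> \<omega>)"
  unfolding mgf_def affinity_def exp_half_llr[OF assms] exp_neg_half_llr[OF assms] by simp_all

lemma affinity_integrable: "\<mu> \<in> M \<Longrightarrow> \<nu> \<in> M \<Longrightarrow> integrable P (\<lambda>\<omega>. sqrt (p \<mu> \<omega> * p \<nu> \<omega>))"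
  using mgf_integrable[OF half_llr_in_F] exp_half_llr by fastforce

lemma affinity_pos: "\<mu> \<in> M \<Longrightarrow> \<nu> \<in> M \<Longrightarrow> 0 < affinity \<mu> \<nu>"
  using mgf_pos[OF half_llr_in_F] affinity_mgf(1) by metis

lemma affinity_self: "\<mu> \<in> M \<Longrightarrow> affinity \<mu> \<mu> = 1"
  unfolding affinity_def using p_integral p_pos by (simp add: less_imp_le)

text \<open>Key inequality relating affinity and log-moments: for every \<psi> in F,
  2 ln(affinity \<mu> \<nu>) \<le> \<Lambda> \<mu> \<psi> + \<Lambda> \<nu> (-\<psi>), with equality for \<psi> = half_llr \<mu> \<nu>.\<close>
lemma log_affinity_le_\<Lambda>:
  assumes "\<psi> \<in> F" "\<mu> \<in> M" "\<nu> \<in> M"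
  shows "2 * ln (affinity \<mu> \<nu>) \<le> \<Lambda> \<mu> \<psi> + \<Lambda> \<nu> (\<lambda>\<omega>. - \<psi> \<omega>)"
proof -
  have neg: "(\<lambda>\<omega>. - \<psi> \<omega>) \<in> F" using F_scale[OF assms(1), of "-1"] by simp
  define I1 where "I1 = mgf \<mu> \<psi>"
  define I2 where "I2 = mgf \<nu> (\<lambda>\<omega>. - \<psi> \<omega>)"
  have I: "0 < I1" "0 < I2" unfolding I1_def I2_def using mgf_pos assms neg by auto
  define s where "s = sqrt (I2 / I1)"
  have s: "0 < s" unfolding s_def using I by simp
  text \<open>Pointwise AM-GM with the weight s balancing the two exponential moments.\<close>
  have pointwise: "sqrt (p \<mu> \<omega> * p \<nu> \<omega>)
      \<le> (s * (exp (\<psi> \<omega>) * p \<mu> \<omega>) + (1 / s) * (exp (- \<psi> \<omega>) * p \<nu> \<omega>)) / 2" for \<omega>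
  proof -
    have "sqrt (p \<mu> \<omega> * p \<nu> \<omega>) = sqrt ((s * (exp (\<psi> \<omega>) * p \<mu> \<omega>)) * ((1 / s) * (exp (- \<psi> \<omega>) * p \<nu> \<omega>)))"
      using s by (simp add: exp_minus field_simps)
    also have "\<dots> \<le> (s * (exp (\<psi> \<omega>) * p \<mu> \<omega>) + (1 / s) * (exp (- \<psi> \<omega>) * p \<nu> \<omega>)) / 2"
      using s p_pos assms by (intro arith_geo_mean_sqrt) (auto intro!: mult_nonneg_nonneg less_imp_le)
    finally show ?thesis .
  qed
  have "affinity \<mu> \<nu> \<le> (\<integral>\<omega>. (s * (exp (\<psi> \<omega>) * p \<mu> \<omega>) + (1 / s) * (exp (- \<psi> \<omega>) * p \<nu> \<omega>)) / 2 \<partial>P)"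
    unfolding affinity_def using pointwise mgf_integrable[OF assms(1,2)] mgf_integrable[OF neg assms(3)]
      affinity_integrable[OF assms(2,3)]
    by (intro integral_mono) auto
  also have "\<dots> = (s * I1 + (1 / s) * I2) / 2"
    unfolding I1_def I2_def mgf_def using mgf_integrable[OF assms(1,2)] mgf_integrable[OF neg assms(3)] by simp
  also have "\<dots> = sqrt (I1 * I2)"
    unfolding s_def using I by (simp add: real_sqrt_divide field_simps real_sqrt_mult)
  finally have aff: "affinity \<mu> \<nu> \<le> sqrt (I1 * I2)" .
  have "2 * ln (affinity \<mu> \<nu>) = ln (affinity \<mu> \<nu> ^ 2)"
    using affinity_pos assms by (simp add: ln_realpow)
  also have "\<dots> \<le> ln (sqrt (I1 * I2) ^ 2)"
    using aff affinity_pos[OF assms(2,3)] by (subst ln_le_cancel_iff) (auto intro: power_mono)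
  also have "\<dots> = ln I1 + ln I2" using I by (simp add: ln_mult)
  finally show ?thesis unfolding I1_def I2_def \<Lambda>_def .
qed

text \<open>The logarithm of the affinity is jointly concave on M \<times> M: it is the minimum over \<psi> of
  the concave functions (\<Lambda> \<mu> \<psi> + \<Lambda> \<nu> (-\<psi>))/2, attained at \<psi> = half_llr \<mu> \<nu>.\<close>
lemma log_affinity_concave: "concave_on (M \<times> M) (\<lambda>z. ln (affinity (fst z) (snd z)))"
  unfolding concave_on_iff
proof (intro conjI ballI allI impI)
  show "convex (M \<times> M)" using M_convex by (simp add: convex_Times)
next
  fix z1 z2 :: "'m \<times> 'm" and u v :: real
  assume z: "z1 \<in> M \<times> M" "z2 \<in> M \<times> M" and uv: "0 \<le> u" "0 \<le> v" "u + v = 1"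
  obtain \<mu>1 \<nu>1 \<mu>2 \<nu>2 where z1: "z1 = (\<mu>1, \<nu>1)" "\<mu>1 \<in> M" "\<nu>1 \<in> M"
    and z2: "z2 = (\<mu>2, \<nu>2)" "\<mu>2 \<in> M" "\<nu>2 \<in> M" using z by auto
  define \<mu> where "\<mu> = u *\<^sub>R \<mu>1 + v *\<^sub>R \<mu>2"
  define \<nu> where "\<nu> = u *\<^sub>R \<nu>1 + v *\<^sub>R \<nu>2"
  have m: "\<mu> \<in> M" "\<nu> \<in> M" unfolding \<mu>_def \<nu>_def using M_convex z1 z2 uv by (auto simp: convex_def)
  define \<psi> where "\<psi> = half_llr \<mu> \<nu>"
  have \<psi>: "\<psi> \<in> F" "(\<lambda>\<omega>. - \<psi> \<omega>) \<in> F" unfolding \<psi>_def using half_llr_in_F neg_half_llr_in_F m by auto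
  have eq: "2 * ln (affinity \<mu> \<nu>) = \<Lambda> \<mu> \<psi> + \<Lambda> \<nu> (\<lambda>\<omega>. - \<psi> \<omega>)"
    unfolding \<Lambda>_def \<psi>_def using affinity_mgf[OF m] by simp
  have "u * \<Lambda> \<mu>1 \<psi> + v * \<Lambda> \<mu>2 \<psi> \<le> \<Lambda> \<mu> \<psi>"
    using \<Lambda>_concave[OF \<psi>(1)] z1 z2 uv unfolding concave_on_iff \<mu>_def by blast
  moreover have "u * \<Lambda> \<nu>1 (\<lambda>\<omega>. - \<psi> \<omega>) + v * \<Lambda> \<nu>2 (\<lambda>\<omega>. - \<psi> \<omega>) \<le> \<Lambda> \<nu> (\<lambda>\<omega>. - \<psi> \<omega>)"
    using \<Lambda>_concave[OF \<psi>(2)] z1 z2 uv unfolding concave_on_iff \<nu>_def by blast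
  moreover have "u * (2 * ln (affinity \<mu>1 \<nu>1)) \<le> u * (\<Lambda> \<mu>1 \<psi> + \<Lambda> \<nu>1 (\<lambda>\<omega>. - \<psi> \<omega>))"
    "v * (2 * ln (affinity \<mu>2 \<nu>2)) \<le> v * (\<Lambda> \<mu>2 \<psi> + \<Lambda> \<nu>2 (\<lambda>\<omega>. - \<psi> \<omega>))"
    using log_affinity_le_\<Lambda>[OF \<psi>(1)] z1 z2 uv by (auto intro: mult_left_mono)
  ultimately have "u * ln (affinity \<mu>1 \<nu>1) + v * ln (affinity \<mu>2 \<nu>2) \<le> ln (affinity \<mu> \<nu>)"
    using eq by (simp add: algebra_simps)
  then show "u * ln (affinity (fst z1) (snd z1)) + v * ln (affinity (fst z2) (snd z2))
      \<le> ln (affinity (fst (u *\<^sub>R z1 + v *\<^sub>R z2)) (snd (u *\<^sub>R z1 + v *\<^sub>R z2)))"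
    unfolding z1 z2 \<mu>_def \<nu>_def by simp
qed

lemma log_affinity_continuous: "continuous_on (M \<times> M) (\<lambda>z. ln (affinity (fst z) (snd z)))"
  using concave_on_continuous[OF open_Times[OF M_open M_open] log_affinity_concave] .

definition Q :: "'m \<Rightarrow> 'a measure" where
  "Q \<mu> = density P (\<lambda>\<omega>. ennreal (p \<mu> \<omega>))"

lemma sets_Q [simp]: "sets (Q \<mu>) = sets P"
  unfolding Q_def by simp

lemma prob_space_Q:
  assumes "\<mu> \<in> M"
  shows "prob_space (Q \<mu>)"
proof (rule prob_spaceI)
  have "emeasure (Q \<mu>) (space (Q \<mu>)) = (\<integral>\<^sup>+\<omega>. ennreal (p \<mu> \<omega>) \<partial>P)"
    unfolding Q_def using emeasure_density[OF _ sets.top, of "\<lambda>\<omega>. ennreal (p \<mu> \<omega>)" P] p_measurable[OF assms]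
    by simp
  also have "\<dots> = 1" using dens assms unfolding density_family_def by auto
  finally show "emeasure (Q \<mu>) (space (Q \<mu>)) = 1" .
qed

lemma measure_Q:
  assumes "S \<in> sets P" "\<mu> \<in> M"
  shows "measure (Q \<mu>) S = (\<integral>\<omega>. indicator S \<omega> * p \<mu> \<omega> \<partial>P)"
proof -
  have "measure (Q \<mu>) S = integral\<^sup>L (Q \<mu>) (indicator S)" unfolding Q_def by simp
  also have "\<dots> = (\<integral>\<omega>. p \<mu> \<omega> *\<^sub>R indicator S \<omega> \<partial>P)"
    unfolding Q_def using assms p_measurable[OF assms(2)] p_pos[OF assms(2)]
    by (intro integral_density) (auto intro: less_imp_le)
  finally show ?thesis by (simp add: mult.commute)
qed

lemma integrable_indicator_p: "S \<in> sets P \<Longrightarrow> \<mu> \<in> M \<Longrightarrow> integrable P (\<lambda>\<omega>. indicator S \<omega> * p \<mu> \<omega>)"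
  using integrable_mult_indicator[of S P "p \<mu>"] p_integrable by auto

lemma positivity_set_measurable: "\<phi> \<in> F \<Longrightarrow> {\<omega>. 0 < \<phi> \<omega>} \<in> sets P"
  using F_measurable borel_measurable_iff_greater[of \<phi> P] by fastforce

lemma chernoff:
  assumes "\<phi> \<in> F" "\<mu> \<in> M"
  shows "measure (Q \<mu>) {\<omega>. 0 < \<phi> \<omega>} \<le> mgf \<mu> \<phi>"
proof -
  have "(\<integral>\<omega>. indicator {\<omega>. 0 < \<phi> \<omega>} \<omega> * p \<mu> \<omega> \<partial>P) \<le> mgf \<mu> \<phi>"
    unfolding mgf_def
    using integrable_indicator_p[OF positivity_set_measurable[OF assms(1)] assms(2)]
      mgf_integrable[OF assms] p_pos[OF assms(2)]
    by (intro integral_mono) (auto simp: indicator_def less_imp_le intro!: mult_right_mono)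
  then show ?thesis using measure_Q[OF positivity_set_measurable[OF assms(1)] assms(2)] by simp
qed

lemma two_sided_chernoff:
  assumes \<phi>: "\<phi> \<in> F" and \<mu>: "\<mu> \<in> M" and \<beta>: "0 < \<beta>"
  shows "measure (Q \<mu>) {\<omega>. \<delta> < \<bar>\<phi> \<omega> - c\<bar>}
    \<le> exp ((- c - \<delta>) / \<beta>) * mgf \<mu> (\<lambda>\<omega>. (1 / \<beta>) * \<phi> \<omega>)
      + exp ((c - \<delta>) / \<beta>) * mgf \<mu> (\<lambda>\<omega>. (- 1 / \<beta>) * \<phi> \<omega>)"
proof -
  define \<phi>1 where "\<phi>1 = (\<lambda>\<omega>. (1 / \<beta>) * \<phi> \<omega> + (- c - \<delta>) / \<beta>)"
  define \<phi>2 where "\<phi>2 = (\<lambda>\<omega>. (- 1 / \<beta>) * \<phi> \<omega> + (c - \<delta>) / \<beta>)"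
  have F12: "\<phi>1 \<in> F" "\<phi>2 \<in> F" unfolding \<phi>1_def \<phi>2_def by (intro F_add_const F_scale \<phi>)+
  interpret prob_space "Q \<mu>" using prob_space_Q[OF \<mu>] .
  have "\<phi>1 \<omega> = (\<phi> \<omega> - c - \<delta>) / \<beta>" "\<phi>2 \<omega> = (c - \<phi> \<omega> - \<delta>) / \<beta>" for \<omega>
    unfolding \<phi>1_def \<phi>2_def using \<beta> by (simp_all add: field_simps)
  then have "{\<omega>. \<delta> < \<bar>\<phi> \<omega> - c\<bar>} \<subseteq> {\<omega>. 0 < \<phi>1 \<omega>} \<union> {\<omega>. 0 < \<phi>2 \<omega>}"
    using \<beta> by (auto simp: abs_if zero_less_divide_iff)
  then have "prob {\<omega>. \<delta> < \<bar>\<phi> \<omega> - c\<bar>} \<le> prob ({\<omega>. 0 < \<phi>1 \<omega>} \<union> {\<omega>. 0 < \<phi>2 \<omega>})"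
    using positivity_set_measurable[OF F12(1)] positivity_set_measurable[OF F12(2)]
    by (intro finite_measure_mono) auto
  also have "\<dots> \<le> prob {\<omega>. 0 < \<phi>1 \<omega>} + prob {\<omega>. 0 < \<phi>2 \<omega>}"
    using positivity_set_measurable[OF F12(1)] positivity_set_measurable[OF F12(2)]
    by (intro measure_Un_le) auto
  also have "\<dots> \<le> mgf \<mu> \<phi>1 + mgf \<mu> \<phi>2"
    using chernoff[OF F12(1) \<mu>] chernoff[OF F12(2) \<mu>] by simp
  finally show ?thesis unfolding \<phi>1_def \<phi>2_def mgf_add_const by (simp add: mult.commute)
qed

lemma affinity_testing_bound:
  assumes E: "E \<in> sets P" and \<mu>: "\<mu> \<in> M" and \<nu>: "\<nu> \<in> M" and e: "0 < e"
    and small: "measure (Q \<mu>) E < e" "measure (Q \<nu>) (UNIV - E) < e"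
  shows "affinity \<mu> \<nu> < 2 * sqrt e"
proof -
  define s where "s = sqrt e"
  have s: "0 < s" unfolding s_def using e by simp
  have E': "UNIV - E \<in> sets P" using E by (metis sets.compl_sets space_P)
  define h where "h \<omega> = (1 / (2 * s)) * (indicator E \<omega> * p \<mu> \<omega>) + (s / 2) * (indicator E \<omega> * p \<nu> \<omega>)
      + (s / 2) * (indicator (UNIV - E) \<omega> * p \<mu> \<omega>) + (1 / (2 * s)) * (indicator (UNIV - E) \<omega> * p \<nu> \<omega>)"
    for \<omega>
  text \<open>Pointwise AM-GM, with the weights chosen according to the side of E.\<close>
  have pointwise: "sqrt (p \<mu> \<omega> * p \<nu> \<omega>) \<le> h \<omega>" for \<omega>
  proof (cases "\<omega> \<in> E")
    case True
    then show ?thesis unfolding h_def using sqrt_mult_le_weighted[OF s, of "p \<mu> \<omega>" "p \<nu> \<omega>"] p_pos \<mu> \<nu>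
      by (simp add: less_imp_le field_simps)
  next
    case False
    then show ?thesis unfolding h_def using sqrt_mult_le_weighted[of "1 / s" "p \<mu> \<omega>" "p \<nu> \<omega>"] s p_pos \<mu> \<nu>
      by (simp add: less_imp_le field_simps)
  qed
  have "affinity \<mu> \<nu> \<le> (\<integral>\<omega>. h \<omega> \<partial>P)"
    unfolding affinity_def h_def using pointwise[unfolded h_def] affinity_integrable[OF \<mu> \<nu>]
      integrable_indicator_p[OF E \<mu>] integrable_indicator_p[OF E \<nu>]
      integrable_indicator_p[OF E' \<mu>] integrable_indicator_p[OF E' \<nu>]
    by (intro integral_mono) auto
  also have "\<dots> = (1 / (2 * s)) * measure (Q \<mu>) E + (s / 2) * measure (Q \<nu>) E
      + (s / 2) * measure (Q \<mu>) (UNIV - E) + (1 / (2 * s)) * measure (Q \<nu>) (UNIV - E)"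
    unfolding h_def measure_Q[OF E \<mu>] measure_Q[OF E \<nu>] measure_Q[OF E' \<mu>] measure_Q[OF E' \<nu>]
    using integrable_indicator_p[OF E \<mu>] integrable_indicator_p[OF E \<nu>]
      integrable_indicator_p[OF E' \<mu>] integrable_indicator_p[OF E' \<nu>]
    by simp
  also have "\<dots> < (1 / (2 * s)) * e + (s / 2) * 1 + (s / 2) * 1 + (1 / (2 * s)) * e"
  proof -
    have "(1 / (2 * s)) * measure (Q \<mu>) E < (1 / (2 * s)) * e"
      "(1 / (2 * s)) * measure (Q \<nu>) (UNIV - E) < (1 / (2 * s)) * e"
      using small s by (simp_all add: divide_strict_right_mono)
    moreover have "(s / 2) * measure (Q \<nu>) E \<le> (s / 2) * 1" "(s / 2) * measure (Q \<mu>) (UNIV - E) \<le> (s / 2) * 1"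
      using s prob_space.prob_le_1[OF prob_space_Q[OF \<nu>], of E]
        prob_space.prob_le_1[OF prob_space_Q[OF \<mu>], of "UNIV - E"] by simp_all
    ultimately show ?thesis by linarith
  qed
  also have "\<dots> = 2 * sqrt e" unfolding s_def using e by (simp add: field_simps)
  finally show ?thesis .
qed

end

lemma risk_le_threshold:
  assumes "X \<noteq> {}" and err: "\<And>x. x \<in> X \<Longrightarrow> err_prob P p A g gh x \<delta> \<le> B" and "B < \<epsilon>"
  shows "risk P p X A g gh \<epsilon> \<le> ereal \<delta>"
proof -
  have "(SUP x\<in>X. err_prob P p A g gh x \<delta>) \<le> B" using assms(1) err by (intro cSUP_least) auto
  then show ?thesis unfolding risk_def using assms(3) by (intro Inf_lower) auto
qed

lemma err_prob_lt_of_admissible: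
  assumes "(SUP x\<in>X. err_prob P p A g gh x \<delta>) < \<epsilon>" and "x \<in> X"
    and bdd: "\<And>x. x \<in> X \<Longrightarrow> err_prob P p A g gh x \<delta> \<le> 1"
  shows "err_prob P p A g gh x \<delta> < \<epsilon>"
proof -
  have "bdd_above ((\<lambda>x. err_prob P p A g gh x \<delta>) ` X)" using bdd by (auto intro!: bdd_aboveI)
  then show ?thesis using cSUP_upper[OF assms(2)] assms(1) by fastforce
qed

locale linear_estimation = good_family P M p F
  for P :: "'a::polish_space measure" and M :: "'m::euclidean_space set"
    and p :: "'m \<Rightarrow> 'a \<Rightarrow> real" and F :: "('a \<Rightarrow> real) set" +
  fixes X :: "'n::euclidean_space set" and A :: "'n \<Rightarrow> 'm" and g :: 'n and \<epsilon> :: real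
  assumes X_nonempty: "X \<noteq> {}" and X_convex: "convex X" and X_compact: "compact X"
    and A_affine: "\<And>x y t. A ((1 - t) *\<^sub>R x + t *\<^sub>R y) = (1 - t) *\<^sub>R A x + t *\<^sub>R A y"
    and A_continuous: "continuous_on UNIV A"
    and A_X: "A ` X \<subseteq> M" and eps: "0 < \<epsilon>" "\<epsilon> < 1/4"
begin

lemma A_in_M: "x \<in> X \<Longrightarrow> A x \<in> M"
  using A_X by auto

lemma XX_props: "compact (X \<times> X)" "convex (X \<times> X)" "X \<times> X \<noteq> {}"
  using X_compact X_convex X_nonempty by (simp_all add: compact_Times convex_Times)

text \<open>The two constants of the bound: \<kappa> = ln(2/\<epsilon>) and \<rho> = -ln(2\<surd>\<epsilon>) = ln(1/(4\<epsilon>))/2,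
  so that the factor of the theorem is \<kappa>/\<rho>.\<close>
definition \<kappa> :: real where "\<kappa> = ln (2 / \<epsilon>)"
definition \<rho> :: real where "\<rho> = - ln (2 * sqrt \<epsilon>)"

lemma two_sqrt_eps_lt_1: "2 * sqrt \<epsilon> < 1"
proof -
  have "sqrt \<epsilon> < sqrt (1/4)" using eps by (intro real_sqrt_less_mono) auto
  also have "sqrt (1/4) = (1/2::real)" by (simp add: real_sqrt_divide)
  finally show ?thesis by simp
qed

lemma \<rho>_pos: "0 < \<rho>"
  unfolding \<rho>_def using two_sqrt_eps_lt_1 eps by simp

lemma \<rho>_le_\<kappa>: "\<rho> \<le> \<kappa>"
proof -
  have "sqrt \<epsilon> * sqrt \<epsilon> \<le> 4 * sqrt \<epsilon>" using eps two_sqrt_eps_lt_1 by (intro mult_right_mono) auto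
  then have "1 / (2 * sqrt \<epsilon>) \<le> 2 / \<epsilon>" using eps by (simp add: field_simps)
  then have "ln (1 / (2 * sqrt \<epsilon>)) \<le> ln (2 / \<epsilon>)" using eps by (subst ln_le_cancel_iff) auto
  then show ?thesis unfolding \<rho>_def \<kappa>_def using eps by (simp add: ln_div)
qed

lemma \<kappa>_pos: "0 < \<kappa>"
  using \<rho>_pos \<rho>_le_\<kappa> by simp

lemma exp_neg_\<kappa>: "exp (- \<kappa>) = \<epsilon> / 2"
  unfolding \<kappa>_def using eps by (simp add: exp_minus inverse_eq_divide)

lemma exp_neg_\<rho>: "exp (- \<rho>) = 2 * sqrt \<epsilon>"
  unfolding \<rho>_def using eps by simp

lemma theta_eq: "2 * ln (2 / \<epsilon>) / ln (1 / (4 * \<epsilon>)) = \<kappa> / \<rho>"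
proof -
  have "ln (4 * \<epsilon>) = ln ((2 * sqrt \<epsilon>) ^ 2)" using eps by (simp add: power_mult_distrib)
  also have "\<dots> = 2 * ln (2 * sqrt \<epsilon>)" using eps by (subst ln_realpow) auto
  finally have "ln (1 / (4 * \<epsilon>)) = 2 * \<rho>" unfolding \<rho>_def using eps by (simp add: ln_div)
  then show ?thesis unfolding \<kappa>_def by simp
qed

definition log_aff :: "'n \<times> 'n \<Rightarrow> real" where
  "log_aff z = ln (affinity (A (fst z)) (A (snd z)))"

lemma A_pair_affine:
  "(\<lambda>z. (A (fst z), A (snd z))) ((1 - t) *\<^sub>R z1 + t *\<^sub>R z2)
     = (1 - t) *\<^sub>R (A (fst z1), A (snd z1)) + t *\<^sub>R (A (fst z2), A (snd z2))"
  by (simp add: A_affine)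

lemma log_aff_concave: "concave_on (X \<times> X) log_aff"
  unfolding log_aff_def
  using concave_on_affine_compose[OF log_affinity_concave XX_props(2) _ A_pair_affine] A_X
  by fastforce

lemma log_aff_continuous: "continuous_on (X \<times> X) log_aff"
proof -
  have "continuous_on (X \<times> X) (\<lambda>z. (A (fst z), A (snd z)))"
    by (intro continuous_intros continuous_on_compose2[OF A_continuous]) auto
  then show ?thesis unfolding log_aff_def
    using continuous_on_compose2[OF log_affinity_continuous] A_X by fastforce
qed

lemma log_aff_diag: "x \<in> X \<Longrightarrow> log_aff (x, x) = 0"
  unfolding log_aff_def using affinity_self A_in_M by simp

abbreviation err :: "('a \<Rightarrow> real) \<Rightarrow> 'n \<Rightarrow> real \<Rightarrow> real" where
  "err gh x \<delta> \<equiv> err_prob P p A g gh x \<delta>"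

lemma deviation_set_measurable:
  fixes gh :: "'a \<Rightarrow> real"
  shows "gh \<in> borel_measurable P \<Longrightarrow> {\<omega>. \<delta> < \<bar>gh \<omega> - c\<bar>} \<in> sets P"
  using borel_measurable_iff_greater[of "\<lambda>\<omega>. \<bar>gh \<omega> - c\<bar>" P] by fastforce

lemma err_eq: "err gh x \<delta> = measure (Q (A x)) {\<omega>. \<delta> < \<bar>gh \<omega> - g \<bullet> x\<bar>}"
  unfolding err_prob_def Q_def by simp

lemma err_le_1: "x \<in> X \<Longrightarrow> err gh x \<delta> \<le> 1"
  unfolding err_eq using prob_space.prob_le_1[OF prob_space_Q[OF A_in_M]] .

text \<open>Lower bound on the minimax risk by two-point testing: if the observation distributions of
  two signals have affinity at least 2\<surd>\<epsilon>, no estimate can have \<epsilon>-risk below half the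
  distance of their values.\<close>
lemma risk_star_lower_bound:
  assumes x: "x \<in> X" and y: "y \<in> X" and aff: "2 * sqrt \<epsilon> \<le> affinity (A x) (A y)"
  shows "ereal (\<bar>g \<bullet> x - g \<bullet> y\<bar> / 2) \<le> risk_star P p X A g \<epsilon>"
  unfolding risk_star_def risk_def
proof (intro INF_greatest Inf_greatest, safe)
  fix gh :: "'a \<Rightarrow> real" and \<delta>
  assume gh: "gh \<in> borel_measurable P" and adm: "(SUP x\<in>X. err gh x \<delta>) < \<epsilon>"
  show "ereal (\<bar>g \<bullet> x - g \<bullet> y\<bar> / 2) \<le> ereal \<delta>"
  proof (rule ccontr)
    assume "\<not> ?thesis"
    then have far: "2 * \<delta> < \<bar>g \<bullet> x - g \<bullet> y\<bar>" by simp
    define E where "E = {\<omega>. \<delta> < \<bar>gh \<omega> - g \<bullet> x\<bar>}"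
    define E2 where "E2 = {\<omega>. \<delta> < \<bar>gh \<omega> - g \<bullet> y\<bar>}"
    have E: "E \<in> sets P" "E2 \<in> sets P"
      unfolding E_def E2_def using deviation_set_measurable[OF gh] by auto
    text \<open>Outside E the estimate is close to g x, hence far from g y.\<close>
    have "UNIV - E \<subseteq> E2" unfolding E_def E2_def using far by auto
    then have "measure (Q (A y)) (UNIV - E) \<le> measure (Q (A y)) E2"
    proof -
      interpret prob_space "Q (A y)" using prob_space_Q[OF A_in_M[OF y]] .
      show ?thesis using E(2) \<open>UNIV - E \<subseteq> E2\<close> by (intro finite_measure_mono) auto
    qed
    also have "\<dots> < \<epsilon>"
      unfolding E2_def err_eq[symmetric] using err_prob_lt_of_admissible[OF adm y err_le_1] .
    finally have "affinity (A x) (A y) < 2 * sqrt \<epsilon>"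
      using affinity_testing_bound[OF E(1) A_in_M[OF x] A_in_M[OF y] eps(1)]
        err_prob_lt_of_admissible[OF adm x err_le_1] unfolding E_def err_eq by blast
    then show False using aff by simp
  qed
qed

text \<open>Taking x = y shows that the minimax risk is nonnegative.\<close>
lemma risk_star_nonneg: "0 \<le> risk_star P p X A g \<epsilon>"
proof -
  obtain x where x: "x \<in> X" using X_nonempty by blast
  show ?thesis
    using risk_star_lower_bound[OF x x] affinity_self[OF A_in_M[OF x]] two_sqrt_eps_lt_1
    by (simp add: zero_ereal_def)
qed

text \<open>The pair is
  shrunk towards its midpoint by the factor \<rho>/\<kappa>; by concavity of the log-affinity (which
  vanishes on the diagonal) the shrunk pair has log-affinity at least -\<rho>, i.e. affinity at
  least 2\<surd>\<epsilon>.\<close>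
lemma gap_le_risk_star:
  assumes R: "risk_star P p X A g \<epsilon> = ereal R" and z: "z \<in> X \<times> X" and lz: "- \<kappa> \<le> log_aff z"
  shows "\<bar>g \<bullet> fst z - g \<bullet> snd z\<bar> / 2 \<le> (\<kappa> / \<rho>) * R"
proof -
  obtain x y where xy: "z = (x, y)" "x \<in> X" "y \<in> X" using z by auto
  define t where "t = \<rho> / \<kappa>"
  have t: "0 < t" "t \<le> 1" unfolding t_def using \<rho>_pos \<rho>_le_\<kappa> \<kappa>_pos by auto
  define m where "m = (1/2) *\<^sub>R x + (1/2) *\<^sub>R y"
  have m: "m \<in> X" unfolding m_def using X_convex xy by (auto simp: convex_def)
  define xt where "xt = (1 - t) *\<^sub>R m + t *\<^sub>R x"
  define yt where "yt = (1 - t) *\<^sub>R m + t *\<^sub>R y"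
  have xt: "xt \<in> X" "yt \<in> X" unfolding xt_def yt_def using X_convex xy m t by (auto simp: convex_def)
  have "(1 - t) *\<^sub>R (m, m) + t *\<^sub>R z = (xt, yt)" unfolding xt_def yt_def xy by simp
  then have "(1 - t) * log_aff (m, m) + t * log_aff z \<le> log_aff (xt, yt)"
    using concave_onD[OF log_aff_concave, of t "(m, m)" z] m z t by auto
  moreover have "t * (- \<kappa>) \<le> t * log_aff z" using lz t by (intro mult_left_mono) auto
  ultimately have "- \<rho> \<le> log_aff (xt, yt)" using log_aff_diag[OF m] \<kappa>_pos unfolding t_def by simp
  then have "2 * sqrt \<epsilon> \<le> affinity (A xt) (A yt)"
    unfolding log_aff_def exp_neg_\<rho>[symmetric] using affinity_pos A_in_M xt
    by (metis exp_le_cancel_iff exp_ln fst_conv snd_conv)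
  then have "\<bar>g \<bullet> xt - g \<bullet> yt\<bar> / 2 \<le> R" using risk_star_lower_bound[OF xt] R by simp
  moreover have "g \<bullet> xt - g \<bullet> yt = t * (g \<bullet> x - g \<bullet> y)"
    unfolding xt_def yt_def by (simp add: inner_add_right algebra_simps)
  ultimately have "t * (\<bar>g \<bullet> x - g \<bullet> y\<bar> / 2) \<le> R" using t by (simp add: abs_mult)
  then show ?thesis unfolding xy t_def using \<rho>_pos \<kappa>_pos by (simp add: field_simps)
qed

lemma gap_concave: "concave_on (X \<times> X) (\<lambda>z. g \<bullet> snd z - g \<bullet> fst z)"
  by (rule concave_on_affine_fun[OF XX_props(2)]) (simp add: inner_add_right inner_diff_right algebra_simps)

text \<open>Lagrangian of the problem of maximizing half the gap g y - g x over pairs of signals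
  subject to the affinity constraint log_aff (x, y) \<ge> -\<kappa>, with multiplier \<beta>.\<close>
definition gap_lagrangian :: "real \<Rightarrow> 'n \<times> 'n \<Rightarrow> real" where
  "gap_lagrangian \<beta> z = (g \<bullet> snd z - g \<bullet> fst z) / 2 + \<beta> * (log_aff z + \<kappa>)"

lemma gap_lagrangian_concave: "0 \<le> \<beta> \<Longrightarrow> concave_on (X \<times> X) (gap_lagrangian \<beta>)"
proof -
  have half_gap: "concave_on (X \<times> X) (\<lambda>z. (g \<bullet> snd z - g \<bullet> fst z) / 2)"
    by (rule concave_on_affine_fun[OF XX_props(2)]) (simp add: inner_add_right inner_diff_right field_simps)
  assume "0 \<le> \<beta>"
  then show ?thesis unfolding gap_lagrangian_def
    by (rule concave_on_add[OF half_gap concave_on_cmul[OF _ concave_on_add[OF log_aff_concave]]])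
      (simp add: concave_on_const XX_props)
qed

lemma gap_lagrangian_continuous: "continuous_on (X \<times> X) (gap_lagrangian \<beta>)"
  unfolding gap_lagrangian_def by (intro continuous_intros log_aff_continuous) auto

lemma gap_lagrangian_mix:
  assumes "(\<Sum>b\<in>B. w b) = 1"
  shows "gap_lagrangian (\<Sum>b\<in>B. w b * \<beta> b) z = (\<Sum>b\<in>B. w b * gap_lagrangian (\<beta> b) z)"
proof -
  have "(\<Sum>b\<in>B. w b * gap_lagrangian (\<beta> b) z)
      = (\<Sum>b\<in>B. w b * ((g \<bullet> snd z - g \<bullet> fst z) / 2) + (w b * \<beta> b) * (log_aff z + \<kappa>))"
    unfolding gap_lagrangian_def by (intro sum.cong refl) (simp add: algebra_simps)
  also have "\<dots> = (\<Sum>b\<in>B. w b) * ((g \<bullet> snd z - g \<bullet> fst z) / 2) + (\<Sum>b\<in>B. w b * \<beta> b) * (log_aff z + \<kappa>)"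
    by (simp add: sum.distrib sum_distrib_right)
  finally show ?thesis using assms unfolding gap_lagrangian_def by simp
qed

text \<open>Pointwise, some multiplier makes the Lagrangian small: on feasible pairs by the
  modulus-of-continuity bound, on infeasible pairs by a large multiplier.\<close>
lemma gap_lagrangian_cover:
  assumes R: "risk_star P p X A g \<epsilon> = ereal R" and z: "z \<in> X \<times> X" and \<eta>: "0 < \<eta>"
  shows "\<exists>\<beta>>0. gap_lagrangian \<beta> z < (\<kappa> / \<rho>) * R + \<eta>"
proof -
  define D where "D = log_aff z + \<kappa>"
  have half_gap: "(g \<bullet> snd z - g \<bullet> fst z) / 2 \<le> \<bar>g \<bullet> fst z - g \<bullet> snd z\<bar> / 2" by (simp add: abs_if)
  show ?thesis
  proof (cases "0 \<le> D")
    case True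
    define \<beta> where "\<beta> = \<eta> / (2 * (D + 1))"
    have "\<beta> * D = (\<eta> / 2) * (D / (D + 1))" unfolding \<beta>_def using True by (simp add: field_simps)
    also have "\<dots> \<le> (\<eta> / 2) * 1" using True \<eta> by (intro mult_left_mono) auto
    moreover have "gap_lagrangian \<beta> z = (g \<bullet> snd z - g \<bullet> fst z) / 2 + \<beta> * D"
      unfolding gap_lagrangian_def D_def ..
    ultimately have "gap_lagrangian \<beta> z < (\<kappa> / \<rho>) * R + \<eta>"
      using gap_le_risk_star[OF R z] True half_gap \<eta> unfolding D_def by linarith
    moreover have "0 < \<beta>" unfolding \<beta>_def using True \<eta> by simp
    ultimately show ?thesis by blast
  next
    case False
    define \<beta> where "\<beta> = (\<bar>g \<bullet> fst z - g \<bullet> snd z\<bar> / 2 + 1) / (- D)"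
    have "0 \<le> (\<kappa> / \<rho>) * R"
      using risk_star_nonneg R \<kappa>_pos \<rho>_pos by (simp add: zero_ereal_def)
    moreover have "\<beta> * D = - (\<bar>g \<bullet> fst z - g \<bullet> snd z\<bar> / 2 + 1)" unfolding \<beta>_def using False by simp
    moreover have "gap_lagrangian \<beta> z = (g \<bullet> snd z - g \<bullet> fst z) / 2 + \<beta> * D"
      unfolding gap_lagrangian_def D_def ..
    ultimately have "gap_lagrangian \<beta> z < (\<kappa> / \<rho>) * R + \<eta>"
      using half_gap \<eta> by linarith
    moreover have "0 < \<beta>" unfolding \<beta>_def using False by (simp add: field_simps add_pos_nonneg)
    ultimately show ?thesis by blast
  qed
qed

lemma lagrange_multiplier:
  assumes R: "risk_star P p X A g \<epsilon> = ereal R" and \<eta>: "0 < \<eta>"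
  shows "\<exists>\<beta>>0. \<forall>z\<in>X \<times> X. gap_lagrangian \<beta> z \<le> (\<kappa> / \<rho>) * R + \<eta>"
proof -
  have "\<exists>\<beta>\<in>{0<..}. \<forall>z\<in>X \<times> X. gap_lagrangian \<beta> z \<le> (\<kappa> / \<rho>) * R + \<eta>"
  proof (rule concave_minimax[OF XX_props])
    show "concave_on (X \<times> X) (gap_lagrangian \<beta>)" if "\<beta> \<in> {0<..}" for \<beta>
      using that by (intro gap_lagrangian_concave) simp
    show "continuous_on (X \<times> X) (gap_lagrangian \<beta>)" for \<beta>
      by (rule gap_lagrangian_continuous)
    show "\<exists>\<beta>\<in>{0<..}. gap_lagrangian \<beta> z < (\<kappa> / \<rho>) * R + \<eta>" if "z \<in> X \<times> X" for z
      using gap_lagrangian_cover[OF R that \<eta>] by auto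
  next
    fix \<beta> w :: "('n \<times> 'n) \<times> real \<Rightarrow> real"
    assume \<beta>: "\<And>b. b \<in> Basis \<Longrightarrow> \<beta> b \<in> {0<..}"
      and w: "\<And>b. b \<in> Basis \<Longrightarrow> 0 \<le> w b" "(\<Sum>b\<in>Basis. w b) = 1"
    have "\<exists>b\<in>Basis. w b \<noteq> 0"
    proof (rule ccontr)
      assume "\<not> ?thesis"
      then have "(\<Sum>b\<in>Basis. w b) = 0" by simp
      then show False using w(2) by simp
    qed
    then obtain b1 where b1: "b1 \<in> Basis" "w b1 \<noteq> 0" by blast
    have "0 < (\<Sum>b\<in>Basis. w b * \<beta> b)"
    proof (rule sum_pos2[OF finite_Basis b1(1)])
      show "0 < w b1 * \<beta> b1" using b1 w(1)[of b1] \<beta>[of b1] by simp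
      show "0 \<le> w b * \<beta> b" if "b \<in> Basis" for b using that w(1)[of b] \<beta>[of b] by simp
    qed
    then show "\<exists>k\<in>{0<..}. \<forall>z\<in>X \<times> X. gap_lagrangian k z \<le> (\<Sum>b\<in>Basis. w b * gap_lagrangian (\<beta> b) z)"
      using gap_lagrangian_mix[OF w(2)] by (intro bexI[of _ "\<Sum>b\<in>Basis. w b * \<beta> b"]) auto
  qed
  then show ?thesis by auto
qed

lemma \<Lambda>_A_concave:
  assumes "\<phi> \<in> F"
  shows "concave_on (X \<times> X) (\<lambda>z. \<Lambda> (A (fst z)) \<phi>)" "concave_on (X \<times> X) (\<lambda>z. \<Lambda> (A (snd z)) \<phi>)"
proof -
  have img: "(\<lambda>z. A (fst z)) ` (X \<times> X) \<subseteq> M" "(\<lambda>z. A (snd z)) ` (X \<times> X) \<subseteq> M" using A_in_M by auto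
  show "concave_on (X \<times> X) (\<lambda>z. \<Lambda> (A (fst z)) \<phi>)"
    by (rule concave_on_affine_compose[OF \<Lambda>_concave[OF assms] XX_props(2) img(1)]) (simp add: A_affine)
  show "concave_on (X \<times> X) (\<lambda>z. \<Lambda> (A (snd z)) \<phi>)"
    by (rule concave_on_affine_compose[OF \<Lambda>_concave[OF assms] XX_props(2) img(2)]) (simp add: A_affine)
qed

lemma \<Lambda>_A_continuous:
  assumes "\<phi> \<in> F"
  shows "continuous_on (X \<times> X) (\<lambda>z. \<Lambda> (A (fst z)) \<phi>)" "continuous_on (X \<times> X) (\<lambda>z. \<Lambda> (A (snd z)) \<phi>)"
proof -
  have "continuous_on (X \<times> X) (\<lambda>z. A (fst z))" "continuous_on (X \<times> X) (\<lambda>z. A (snd z))"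
    by (intro continuous_on_compose2[OF A_continuous] continuous_intros, auto)+
  then show "continuous_on (X \<times> X) (\<lambda>z. \<Lambda> (A (fst z)) \<phi>)" "continuous_on (X \<times> X) (\<lambda>z. \<Lambda> (A (snd z)) \<phi>)"
    using continuous_on_compose2[OF \<Lambda>_continuous[OF assms]] A_X by fastforce+
qed

text \<open>Lagrangian of the problem of finding an affine estimate: for the estimate \<psi> (shifted by a
  constant) and temperature \<beta>, its value at (x, y) bounds the two one-sided Chernoff exponents
  at x and at y.\<close>
definition est_lagrangian :: "real \<Rightarrow> ('a \<Rightarrow> real) \<Rightarrow> 'n \<times> 'n \<Rightarrow> real" where
  "est_lagrangian \<beta> \<psi> z = \<beta> * \<Lambda> (A (fst z)) (\<lambda>\<omega>. (1 / \<beta>) * \<psi> \<omega>)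
     + \<beta> * \<Lambda> (A (snd z)) (\<lambda>\<omega>. (- 1 / \<beta>) * \<psi> \<omega>) + (g \<bullet> snd z - g \<bullet> fst z)"

lemma est_lagrangian_concave: "0 \<le> \<beta> \<Longrightarrow> \<psi> \<in> F \<Longrightarrow> concave_on (X \<times> X) (est_lagrangian \<beta> \<psi>)"
  unfolding est_lagrangian_def
  by (intro concave_on_add concave_on_cmul \<Lambda>_A_concave F_scale gap_concave)

lemma est_lagrangian_continuous: "\<psi> \<in> F \<Longrightarrow> continuous_on (X \<times> X) (est_lagrangian \<beta> \<psi>)"
  unfolding est_lagrangian_def[abs_def] by (intro continuous_intros \<Lambda>_A_continuous F_scale)

text \<open>F is closed under mixing for this Lagrangian, by convexity of \<Lambda> in the affine function.\<close>
lemma est_lagrangian_mix: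
  assumes \<beta>: "0 < \<beta>" and B: "finite B" and w: "\<And>b. b \<in> B \<Longrightarrow> 0 \<le> w b" "(\<Sum>b\<in>B. w b) = 1"
    and \<psi>: "\<And>b. b \<in> B \<Longrightarrow> \<psi> b \<in> F" and z: "z \<in> X \<times> X"
  shows "est_lagrangian \<beta> (\<lambda>\<omega>. \<Sum>b\<in>B. w b * \<psi> b \<omega>) z \<le> (\<Sum>b\<in>B. w b * est_lagrangian \<beta> (\<psi> b) z)"
proof -
  have scale: "(\<lambda>\<omega>. c * (\<Sum>b\<in>B. w b * \<psi> b \<omega>)) = (\<lambda>\<omega>. \<Sum>b\<in>B. w b * (c * \<psi> b \<omega>))" for c
    by (simp add: sum_distrib_left mult_ac)
  have jensen: "\<Lambda> (A x) (\<lambda>\<omega>. c * (\<Sum>b\<in>B. w b * \<psi> b \<omega>)) \<le> (\<Sum>b\<in>B. w b * \<Lambda> (A x) (\<lambda>\<omega>. c * \<psi> b \<omega>))"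
    if "x \<in> X" for x c
    unfolding scale using that by (intro \<Lambda>_convex_comb[OF B w] F_scale \<psi> A_in_M)
  have "est_lagrangian \<beta> (\<lambda>\<omega>. \<Sum>b\<in>B. w b * \<psi> b \<omega>) z
      = \<beta> * \<Lambda> (A (fst z)) (\<lambda>\<omega>. (1 / \<beta>) * (\<Sum>b\<in>B. w b * \<psi> b \<omega>))
        + \<beta> * \<Lambda> (A (snd z)) (\<lambda>\<omega>. (- 1 / \<beta>) * (\<Sum>b\<in>B. w b * \<psi> b \<omega>))
        + (g \<bullet> snd z - g \<bullet> fst z)"
    unfolding est_lagrangian_def ..
  also have "\<dots> \<le> \<beta> * (\<Sum>b\<in>B. w b * \<Lambda> (A (fst z)) (\<lambda>\<omega>. (1 / \<beta>) * \<psi> b \<omega>))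
      + \<beta> * (\<Sum>b\<in>B. w b * \<Lambda> (A (snd z)) (\<lambda>\<omega>. (- 1 / \<beta>) * \<psi> b \<omega>))
      + (\<Sum>b\<in>B. w b) * (g \<bullet> snd z - g \<bullet> fst z)"
    using jensen[of "fst z" "1 / \<beta>"] jensen[of "snd z" "- 1 / \<beta>"] z \<beta> w(2)
    by (intro add_mono mult_left_mono) auto
  also have "\<dots> = (\<Sum>b\<in>B. \<beta> * (w b * \<Lambda> (A (fst z)) (\<lambda>\<omega>. (1 / \<beta>) * \<psi> b \<omega>))
      + \<beta> * (w b * \<Lambda> (A (snd z)) (\<lambda>\<omega>. (- 1 / \<beta>) * \<psi> b \<omega>)) + w b * (g \<bullet> snd z - g \<bullet> fst z))"
    by (simp only: sum.distrib sum_distrib_left sum_distrib_right)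
  also have "\<dots> = (\<Sum>b\<in>B. w b * est_lagrangian \<beta> (\<psi> b) z)"
    unfolding est_lagrangian_def by (intro sum.cong refl) (simp add: algebra_simps)
  finally show ?thesis .
qed

lemma est_lagrangian_half_llr:
  assumes \<beta>: "0 < \<beta>" and z: "z \<in> X \<times> X"
  shows "est_lagrangian \<beta> (\<lambda>\<omega>. \<beta> * half_llr (A (fst z)) (A (snd z)) \<omega>) z
    = 2 * gap_lagrangian \<beta> z - 2 * \<beta> * \<kappa>"
proof -
  have m: "A (fst z) \<in> M" "A (snd z) \<in> M" using z A_in_M by auto
  have "\<Lambda> (A (fst z)) (\<lambda>\<omega>. (1 / \<beta>) * (\<beta> * half_llr (A (fst z)) (A (snd z)) \<omega>)) = log_aff z"
    "\<Lambda> (A (snd z)) (\<lambda>\<omega>. (- 1 / \<beta>) * (\<beta> * half_llr (A (fst z)) (A (snd z)) \<omega>)) = log_aff z"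
    unfolding log_aff_def \<Lambda>_def using affinity_mgf[OF m] \<beta> by simp_all
  then show ?thesis unfolding est_lagrangian_def gap_lagrangian_def by (simp add: field_simps)
qed

lemma affine_witness:
  assumes \<beta>: "0 < \<beta>" and T: "\<forall>z\<in>X \<times> X. gap_lagrangian \<beta> z \<le> T" and \<eta>: "0 < \<eta>"
  shows "\<exists>\<psi>\<in>F. \<forall>z\<in>X \<times> X. est_lagrangian \<beta> \<psi> z \<le> 2 * T - 2 * \<beta> * \<kappa> + \<eta>"
proof (rule concave_minimax[OF XX_props])
  fix \<psi> :: "('n \<times> 'n) \<times> real \<Rightarrow> 'a \<Rightarrow> real" and w :: "('n \<times> 'n) \<times> real \<Rightarrow> real"
  assume "\<And>b. b \<in> Basis \<Longrightarrow> \<psi> b \<in> F" "\<And>b. b \<in> Basis \<Longrightarrow> 0 \<le> w b" "(\<Sum>b\<in>Basis. w b) = 1"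
  then show "\<exists>k\<in>F. \<forall>z\<in>X \<times> X. est_lagrangian \<beta> k z \<le> (\<Sum>b\<in>Basis. w b * est_lagrangian \<beta> (\<psi> b) z)"
    using est_lagrangian_mix[OF \<beta> finite_Basis] F_sum[OF finite_Basis] by blast
next
  fix z assume z: "z \<in> X \<times> X"
  have "half_llr (A (fst z)) (A (snd z)) \<in> F" using z A_in_M half_llr_in_F by auto
  then have "(\<lambda>\<omega>. \<beta> * half_llr (A (fst z)) (A (snd z)) \<omega>) \<in> F" by (rule F_scale)
  moreover have "gap_lagrangian \<beta> z \<le> T" using T z by blast
  then have "2 * gap_lagrangian \<beta> z - 2 * \<beta> * \<kappa> < 2 * T - 2 * \<beta> * \<kappa> + \<eta>" using \<eta> by linarith
  ultimately show "\<exists>\<psi>\<in>F. est_lagrangian \<beta> \<psi> z < 2 * T - 2 * \<beta> * \<kappa> + \<eta>"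
    using est_lagrangian_half_llr[OF \<beta> z] by metis
qed (use \<beta> est_lagrangian_concave est_lagrangian_continuous in auto)

lemma shifted_estimate_err:
  assumes \<beta>: "0 < \<beta>" and \<psi>: "\<psi> \<in> F" and x: "x \<in> X"
  shows "err (\<lambda>\<omega>. \<psi> \<omega> + a) x \<delta>
    \<le> exp ((\<beta> * \<Lambda> (A x) (\<lambda>\<omega>. (1 / \<beta>) * \<psi> \<omega>) - g \<bullet> x + a - \<delta>) / \<beta>)
      + exp ((\<beta> * \<Lambda> (A x) (\<lambda>\<omega>. (- 1 / \<beta>) * \<psi> \<omega>) + g \<bullet> x - a - \<delta>) / \<beta>)"
proof -
  have "err (\<lambda>\<omega>. \<psi> \<omega> + a) x \<delta> = measure (Q (A x)) {\<omega>. \<delta> < \<bar>\<psi> \<omega> - (g \<bullet> x - a)\<bar>}"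
    unfolding err_eq by (simp add: algebra_simps)
  also have "\<dots> \<le> exp ((- (g \<bullet> x - a) - \<delta>) / \<beta>) * mgf (A x) (\<lambda>\<omega>. (1 / \<beta>) * \<psi> \<omega>)
      + exp ((g \<bullet> x - a - \<delta>) / \<beta>) * mgf (A x) (\<lambda>\<omega>. (- 1 / \<beta>) * \<psi> \<omega>)"
    by (rule two_sided_chernoff[OF \<psi> A_in_M[OF x] \<beta>])
  also have "\<dots> = exp ((\<beta> * \<Lambda> (A x) (\<lambda>\<omega>. (1 / \<beta>) * \<psi> \<omega>) - g \<bullet> x + a - \<delta>) / \<beta>)
      + exp ((\<beta> * \<Lambda> (A x) (\<lambda>\<omega>. (- 1 / \<beta>) * \<psi> \<omega>) + g \<bullet> x - a - \<delta>) / \<beta>)"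
    unfolding mgf_eq_exp_\<Lambda>[OF F_scale[OF \<psi>] A_in_M[OF x]] using \<beta>
    by (simp add: exp_add[symmetric] field_simps)
  finally show ?thesis .
qed

lemma affine_estimate_risk:
  assumes \<beta>: "0 < \<beta>" and \<psi>: "\<psi> \<in> F" and C: "\<forall>z\<in>X \<times> X. est_lagrangian \<beta> \<psi> z \<le> C" and \<eta>: "0 < \<eta>"
  shows "riskA P p F X A g \<epsilon> \<le> ereal (C / 2 + \<beta> * \<kappa> + \<eta>)"
proof -
  define U where "U x = \<beta> * \<Lambda> (A x) (\<lambda>\<omega>. (1 / \<beta>) * \<psi> \<omega>) - g \<bullet> x" for x
  define V where "V y = \<beta> * \<Lambda> (A y) (\<lambda>\<omega>. (- 1 / \<beta>) * \<psi> \<omega>) + g \<bullet> y" for y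
  have "U x + V y = est_lagrangian \<beta> \<psi> (x, y)" for x y
    unfolding est_lagrangian_def U_def V_def by (simp add: algebra_simps)
  then have "U x + V y \<le> C" if "x \<in> X" "y \<in> X" for x y using C that by auto
  then obtain s where s: "\<forall>x\<in>X. U x \<le> s" "\<forall>y\<in>X. V y \<le> C - s"
    using split_sum_bound[OF X_nonempty] by blast
  define \<delta> where "\<delta> = C / 2 + \<beta> * \<kappa> + \<eta>"
  define gh where "gh = (\<lambda>\<omega>. \<psi> \<omega> + (C / 2 - s))"
  text \<open>Both Chernoff exponents are at most (C/2 - \<delta>)/\<beta> = -\<kappa> - \<eta>/\<beta>.\<close>
  have exponent: "(W + (C / 2 - \<delta>)) / \<beta> \<le> - \<kappa> + - \<eta> / \<beta>" if "W \<le> 0" for W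
  proof -
    have "(W + (C / 2 - \<delta>)) / \<beta> \<le> (- (\<beta> * \<kappa>) - \<eta>) / \<beta>"
      using that \<beta> unfolding \<delta>_def by (intro divide_right_mono) auto
    also have "\<dots> = - \<kappa> + - \<eta> / \<beta>" using \<beta> by (simp add: field_simps)
    finally show ?thesis .
  qed
  have "err gh x \<delta> \<le> \<epsilon> * exp (- \<eta> / \<beta>)" if x: "x \<in> X" for x
  proof -
    have "exp ((U x + (C / 2 - s) - \<delta>) / \<beta>) \<le> exp (- \<kappa> + - \<eta> / \<beta>)"
      "exp ((V x - (C / 2 - s) - \<delta>) / \<beta>) \<le> exp (- \<kappa> + - \<eta> / \<beta>)"
      using exponent[of "U x - s"] exponent[of "V x - (C - s)"] s x by (simp_all add: algebra_simps)
    then have "err gh x \<delta> \<le> exp (- \<kappa> + - \<eta> / \<beta>) + exp (- \<kappa> + - \<eta> / \<beta>)"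
      using shifted_estimate_err[OF \<beta> \<psi> x, of "C / 2 - s" \<delta>] unfolding gh_def U_def V_def by linarith
    then show ?thesis unfolding exp_add exp_neg_\<kappa> by simp
  qed
  moreover have "\<epsilon> * exp (- \<eta> / \<beta>) < \<epsilon>" using eps \<beta> \<eta> by simp
  ultimately have "risk P p X A g gh \<epsilon> \<le> ereal \<delta>" by (intro risk_le_threshold[OF X_nonempty])
  moreover have "riskA P p F X A g \<epsilon> \<le> risk P p X A g gh \<epsilon>"
    unfolding riskA_def gh_def using F_add_const[OF \<psi>] by (rule INF_lower)
  ultimately show ?thesis unfolding \<delta>_def by simp
qed

lemma riskA_le_risk_star: "riskA P p F X A g \<epsilon> \<le> ereal (\<kappa> / \<rho>) * risk_star P p X A g \<epsilon>"
proof (cases "risk_star P p X A g \<epsilon>")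
  case (real R)
  have "riskA P p F X A g \<epsilon> \<le> ereal ((\<kappa> / \<rho>) * R) + ereal e" if e: "0 < e" for e
  proof -
    obtain \<beta> where \<beta>: "0 < \<beta>" "\<forall>z\<in>X \<times> X. gap_lagrangian \<beta> z \<le> (\<kappa> / \<rho>) * R + e / 3"
      using lagrange_multiplier[OF real, of "e / 3"] e by auto
    obtain \<psi> where "\<psi> \<in> F" "\<forall>z\<in>X \<times> X. est_lagrangian \<beta> \<psi> z \<le> 2 * ((\<kappa> / \<rho>) * R + e / 3) - 2 * \<beta> * \<kappa> + e / 3"
      using affine_witness[OF \<beta>, of "e / 3"] e by auto
    then have "riskA P p F X A g \<epsilon>
        \<le> ereal ((2 * ((\<kappa> / \<rho>) * R + e / 3) - 2 * \<beta> * \<kappa> + e / 3) / 2 + \<beta> * \<kappa> + e / 3)"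
      using affine_estimate_risk[OF \<beta>(1)] e by simp
    also have "(2 * ((\<kappa> / \<rho>) * R + e / 3) - 2 * \<beta> * \<kappa> + e / 3) / 2 + \<beta> * \<kappa> + e / 3
        = (\<kappa> / \<rho>) * R + 5 * e / 6" by (simp add: field_simps)
    also have "ereal ((\<kappa> / \<rho>) * R + 5 * e / 6) \<le> ereal ((\<kappa> / \<rho>) * R) + ereal e" using e by simp
    finally show ?thesis .
  qed
  then have "riskA P p F X A g \<epsilon> \<le> ereal ((\<kappa> / \<rho>) * R)" by (rule ereal_le_epsilon2)
  then show ?thesis using real by simp
next
  case PInf
  define \<theta> where "\<theta> = \<kappa> / \<rho>"
  have "0 < \<theta>" unfolding \<theta>_def using \<kappa>_pos \<rho>_pos by simp
  then have "ereal \<theta> * risk_star P p X A g \<epsilon> = \<infinity>" using PInf by simp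
  then have "ereal (\<kappa> / \<rho>) * risk_star P p X A g \<epsilon> = \<infinity>" unfolding \<theta>_def .
  then show ?thesis by (simp only:) simp
next
  case MInf
  then show ?thesis using risk_star_nonneg by simp
qed

end

theorem theorem3p1:
  fixes P :: "'a::polish_space measure"
    and M :: "'m::euclidean_space set"
    and p :: "'m \<Rightarrow> 'a \<Rightarrow> real"
    and F :: "('a \<Rightarrow> real) set"
    and X :: "'n::euclidean_space set"
    and A :: "'n \<Rightarrow> 'm"
    and g :: 'n
    and \<epsilon> :: real
  assumes "sets P = sets borel"
    and "sigma_finite_measure P"
    and "density_family P M p"
    and "fin_dim_fun_space P F"
    and "good_pair P M p F"
    and "X \<noteq> {}" and "convex X" and "compact X"
    and "\<exists>L b. linear L \<and> (\<forall>x. A x = L x + b)"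
    and "A ` X \<subseteq> M"
    and "0 < \<epsilon>" and "\<epsilon> < 1/4"
  shows "riskA P p F X A g \<epsilon>
           \<le> ereal (2 * ln (2 / \<epsilon>) / ln (1 / (4 * \<epsilon>))) * risk_star P p X A g \<epsilon>"
proof -
  obtain L b where L: "linear L" and A_eq: "A = (\<lambda>x. L x + b)" using assms(9) by blast
  have A_affine: "A ((1 - t) *\<^sub>R x + t *\<^sub>R y) = (1 - t) *\<^sub>R A x + t *\<^sub>R A y" for x y t
  proof -
    have "L ((1 - t) *\<^sub>R x + t *\<^sub>R y) = (1 - t) *\<^sub>R L x + t *\<^sub>R L y"
      using L by (simp add: linear_add linear_scale)
    then show ?thesis unfolding A_eq by (simp add: algebra_simps)
  qed
  have A_continuous: "continuous_on UNIV A"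
    unfolding A_eq using L by (intro continuous_intros linear_continuous_on) (simp add: linear_conv_bounded_linear)
  interpret linear_estimation P M p F X A g \<epsilon>
    by unfold_locales (use assms A_affine A_continuous in auto)
  show ?thesis using riskA_le_risk_star theta_eq by simp
qed

end
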